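(* Let $\Omega\subset\mathbb{R}^n$ be an open bounded domain with $\partial\Omega\in C^{2+\beta}$, $\beta>0$, let $r,a_1,a_2,P,Q,K$ be continuous and positive on $\overline\Omega$ with $a_1,a_2,P,Q\in C^2(\Omega)$, and consider the system $$\frac{\partial u}{\partial t}=\nabla\cdot\left[a_1\nabla\left(\frac{u}{P}\right)\right]+r u\left(1-\frac{u+v}{K}\right),\quad \frac{\partial v}{\partial t}=\nabla\cdot\left[a_2\nabla\left(\frac{v}{Q}\right)\right]+r v\left(1-\frac{u+v}{K}\right),$$ in $\Omega$, with $\partial(u/P)/\partial n=\partial(v/Q)/\partial n=0$ on $\partial\Omega$. Assume $P(x)/K(x)$ is constant on $\Omega$ and $Q$, $K$ are linearly independent on $\Omega$. Then the system has no coexistence equilibrium.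
   Context: A coexistence equilibrium is a pair of positive functions $(u_s,v_s)$ solving the stationary version of the system with the given boundary conditions. *)

theory Defs
  imports "HOL-Analysis.Analysis"
begin

definition grad :: "(real^'n \<Rightarrow> real) \<Rightarrow> real^'n \<Rightarrow> real^'n" where
  "grad f x = (\<chi> i. frechet_derivative f (at x) (axis i 1))"

definition divergence :: "(real^'n \<Rightarrow> real^'n) \<Rightarrow> real^'n \<Rightarrow> real" where
  "divergence F x = (\<Sum>i\<in>UNIV. frechet_derivative (\<lambda>y. F y $ i) (at x) (axis i 1))"

definition C1_on :: "(real^'n) set \<Rightarrow> (real^'n \<Rightarrow> real) \<Rightarrow> bool" where
  "C1_on S f \<longleftrightarrow> (\<forall>x\<in>S. f differentiable (at x)) \<and> continuous_on S (grad f)"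

definition C2_on :: "(real^'n) set \<Rightarrow> (real^'n \<Rightarrow> real) \<Rightarrow> bool" where
  "C2_on S f \<longleftrightarrow> C1_on S f \<and> (\<forall>i. C1_on S (\<lambda>y. grad f y $ i))"

definition C1_closure :: "(real^'n) set \<Rightarrow> (real^'n \<Rightarrow> real) \<Rightarrow> bool" where
  "C1_closure S f \<longleftrightarrow> (\<exists>G. continuous_on (closure S) G \<and>
      (\<forall>x\<in>closure S. (f has_derivative (\<lambda>h. G x \<bullet> h)) (at x within closure S)))"

definition dd :: "(real^'n \<Rightarrow> real) \<Rightarrow> 'n \<Rightarrow> 'n \<Rightarrow> real^'n \<Rightarrow> real" where
  "dd f i j x = grad (\<lambda>y. grad f y $ j) x $ i"

text \<open>\<open>\<rho>\<close> is a C^{2+\<beta>} defining function of \<Omega>: \<open>\<Omega> = {\<rho> < 0}\<close>, \<open>\<rho>\<close> is C^2,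
  its second derivatives are \<beta>-Hoelder continuous on a neighbourhood of the
  boundary, and \<open>\<nabla>\<rho> \<noteq> 0\<close> on \<open>{\<rho> = 0}\<close>. (For bounded domains this is the standard
  notion of a C^{2+\<beta>} boundary.)\<close>
definition C2beta_defining_fun :: "real \<Rightarrow> (real^'n) set \<Rightarrow> (real^'n \<Rightarrow> real) \<Rightarrow> bool" where
  "C2beta_defining_fun \<beta> \<Omega> \<rho> \<longleftrightarrow>
     C2_on UNIV \<rho> \<and> \<Omega> = {x. \<rho> x < 0} \<and>
     (\<forall>x. \<rho> x = 0 \<longrightarrow> grad \<rho> x \<noteq> 0) \<and>
     (\<exists>U C. open U \<and> frontier \<Omega> \<subseteq> U \<and>
        (\<forall>i j. \<forall>x\<in>U. \<forall>y\<in>U. \<bar>dd \<rho> i j x - dd \<rho> i j y\<bar> \<le> C * dist x y powr \<beta>))"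

definition normal :: "(real^'n \<Rightarrow> real) \<Rightarrow> real^'n \<Rightarrow> real^'n" where
  "normal \<rho> x = (1 / norm (grad \<rho> x)) *\<^sub>R grad \<rho> x"

definition coexistence_equilibrium ::
  "(real^'n) set \<Rightarrow> (real^'n \<Rightarrow> real) \<Rightarrow>
   (real^'n \<Rightarrow> real) \<Rightarrow> (real^'n \<Rightarrow> real) \<Rightarrow> (real^'n \<Rightarrow> real) \<Rightarrow>
   (real^'n \<Rightarrow> real) \<Rightarrow> (real^'n \<Rightarrow> real) \<Rightarrow> (real^'n \<Rightarrow> real) \<Rightarrow>
   (real^'n \<Rightarrow> real) \<Rightarrow> (real^'n \<Rightarrow> real) \<Rightarrow> bool" where
  "coexistence_equilibrium \<Omega> \<rho> r a1 a2 P Q K u v \<longleftrightarrow>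
     C2_on \<Omega> u \<and> C2_on \<Omega> v \<and>
     continuous_on (closure \<Omega>) u \<and> continuous_on (closure \<Omega>) v \<and>
     (\<forall>x\<in>closure \<Omega>. u x > 0 \<and> v x > 0) \<and>
     C1_closure \<Omega> (\<lambda>x. u x / P x) \<and> C1_closure \<Omega> (\<lambda>x. v x / Q x) \<and>
     (\<forall>x\<in>\<Omega>. divergence (\<lambda>y. a1 y *\<^sub>R grad (\<lambda>z. u z / P z) y) x
                + r x * u x * (1 - (u x + v x) / K x) = 0) \<and>
     (\<forall>x\<in>\<Omega>. divergence (\<lambda>y. a2 y *\<^sub>R grad (\<lambda>z. v z / Q z) y) x
                + r x * v x * (1 - (u x + v x) / K x) = 0) \<and>
     (\<forall>x\<in>frontier \<Omega>. \<exists>D. ((\<lambda>z. u z / P z) has_derivative D) (at x within closure \<Omega>)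
                          \<and> D (normal \<rho> x) = 0) \<and>
     (\<forall>x\<in>frontier \<Omega>. \<exists>D. ((\<lambda>z. v z / Q z) has_derivative D) (at x within closure \<Omega>)
                          \<and> D (normal \<rho> x) = 0)"

end

theory Submission
  imports Defs
begin

text \<open>
  Put \<open>w\<^sub>1 = u/P\<close>, \<open>w\<^sub>2 = v/Q\<close>, \<open>z = (u + v)/K\<close> and write the stationary equations as
  \<open>div (a\<^sub>i \<nabla>w\<^sub>i) = f\<^sub>i\<close> with \<open>f\<^sub>1 = -r u (1 - z)\<close>, \<open>f\<^sub>2 = -r v (1 - z)\<close>.
  The no-flux condition makes the integral of \<open>div (a\<^sub>i \<nabla>w\<^sub>i)\<close> and of
  \<open>div ((a\<^sub>i/w\<^sub>i) \<nabla>w\<^sub>i) = f\<^sub>i/w\<^sub>i - a\<^sub>i |\<nabla>w\<^sub>i|\<^sup>2/w\<^sub>i\<^sup>2\<close> vanish.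
  If \<open>P = c K\<close>, then \<open>f\<^sub>1/w\<^sub>1 = -c r K (1 - z)\<close> and \<open>f\<^sub>1 + f\<^sub>2 = -r K z (1 - z)\<close>, and the combination
  \<open>-(1/c) (f\<^sub>1/w\<^sub>1 - a\<^sub>1 |\<nabla>w\<^sub>1|\<^sup>2/w\<^sub>1\<^sup>2) + f\<^sub>1 + f\<^sub>2 = r K (1 - z)\<^sup>2 + a\<^sub>1 |\<nabla>w\<^sub>1|\<^sup>2/(c w\<^sub>1\<^sup>2)\<close>
  is nonnegative with zero integral. Hence \<open>u + v = K\<close> and \<open>w\<^sub>1\<close> is constant; then \<open>f\<^sub>2 = 0\<close>,
  so \<open>w\<^sub>2\<close> is constant as well, and \<open>K = u + v = k\<^sub>1 c K + k\<^sub>2 Q\<close> with \<open>k\<^sub>2 > 0\<close> contradicts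
  the linear independence of \<open>Q\<close> and \<open>K\<close>.

  The divergence theorem on \<open>\<Omega> = {\<rho> < 0}\<close> is obtained without surface integrals, by
  multiplying with the cutoff \<open>smooth_step (-\<rho>/\<epsilon>)\<close>, for which it reduces to the
  vanishing of integrals of derivatives of compactly supported functions, and letting \<open>\<epsilon> \<rightarrow> 0\<close>:
  the no-flux condition makes the boundary-layer term disappear in the limit.
\<close>

lemma linear_eq_inner_axis_images:
  fixes f' :: "real^'n \<Rightarrow> real"
  assumes "linear f'"
  shows "f' h = (\<chi> i. f' (axis i 1)) \<bullet> h"
proof -
  have "f' h = f' (\<Sum>i\<in>UNIV. (h$i) *\<^sub>R axis i 1)"
    using basis_expansion[of h] by (simp add: scalar_mult_eq_scaleR)
  also have "\<dots> = (\<Sum>i\<in>UNIV. h$i * f' (axis i 1))"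
    using assms by (simp add: linear_sum linear_scale)
  also have "\<dots> = (\<chi> i. f' (axis i 1)) \<bullet> h"
    by (simp add: inner_vec_def mult.commute)
  finally show ?thesis .
qed

lemma has_derivative_grad:
  fixes f :: "real^'n \<Rightarrow> real"
  assumes "f differentiable (at x)"
  shows "(f has_derivative (\<lambda>h. grad f x \<bullet> h)) (at x)"
proof -
  have f': "(f has_derivative frechet_derivative f (at x)) (at x)"
    using assms frechet_derivative_works by blast
  then have "frechet_derivative f (at x) = (\<lambda>h. grad f x \<bullet> h)"
    by (auto simp: grad_def intro!: ext linear_eq_inner_axis_images has_derivative_linear)
  with f' show ?thesis by simp
qed

lemma grad_eqI:
  fixes f :: "real^'n \<Rightarrow> real"
  assumes "(f has_derivative (\<lambda>h. G \<bullet> h)) (at x)"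
  shows "grad f x = G"
proof -
  have "frechet_derivative f (at x) = (\<lambda>h. G \<bullet> h)"
    using frechet_derivative_at[OF assms] by simp
  then show ?thesis by (simp add: grad_def vec_eq_iff inner_axis)
qed

lemma grad_add:
  fixes f g :: "real^'n \<Rightarrow> real"
  assumes "f differentiable (at x)" "g differentiable (at x)"
  shows "grad (\<lambda>y. f y + g y) x = grad f x + grad g x"
  using has_derivative_add[OF has_derivative_grad[OF assms(1)] has_derivative_grad[OF assms(2)]]
  by (intro grad_eqI) (simp add: inner_add_left)

lemma grad_mult:
  fixes f g :: "real^'n \<Rightarrow> real"
  assumes "f differentiable (at x)" "g differentiable (at x)"
  shows "grad (\<lambda>y. f y * g y) x = f x *\<^sub>R grad g x + g x *\<^sub>R grad f x"
  using has_derivative_mult[OF has_derivative_grad[OF assms(1)] has_derivative_grad[OF assms(2)]]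
  by (intro grad_eqI) (simp add: algebra_simps inner_add_left)

lemma grad_inverse:
  fixes f :: "real^'n \<Rightarrow> real"
  assumes "f differentiable (at x)" "f x \<noteq> 0"
  shows "grad (\<lambda>y. inverse (f y)) x = (- inverse (f x ^ 2)) *\<^sub>R grad f x"
  using Deriv.has_derivative_inverse[OF assms(2) has_derivative_grad[OF assms(1)]]
  by (intro grad_eqI) (simp add: algebra_simps power2_eq_square)

lemma grad_divide:
  fixes f g :: "real^'n \<Rightarrow> real"
  assumes "f differentiable (at x)" "g differentiable (at x)" "g x \<noteq> 0"
  shows "grad (\<lambda>y. f y / g y) x = (1 / g x ^ 2) *\<^sub>R (g x *\<^sub>R grad f x - f x *\<^sub>R grad g x)"
proof -
  have "grad (\<lambda>y. f y * inverse (g y)) x = f x *\<^sub>R grad (\<lambda>y. inverse (g y)) x + inverse (g x) *\<^sub>R grad f x"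
    using grad_mult[OF assms(1) differentiable_inverse[OF assms(2,3)]] by simp
  also have "\<dots> = (1 / g x ^ 2) *\<^sub>R (g x *\<^sub>R grad f x - f x *\<^sub>R grad g x)"
    using assms by (simp add: grad_inverse algebra_simps power2_eq_square divide_inverse)
  finally show ?thesis by (simp add: divide_inverse)
qed

lemma divergence_eq_sum_grad: "divergence F x = (\<Sum>i\<in>UNIV. grad (\<lambda>y. F y $ i) x $ i)"
  by (simp add: divergence_def grad_def)

lemma C1_onI:
  assumes "\<And>x. x \<in> S \<Longrightarrow> f differentiable (at x)" and "continuous_on S F"
    and "\<And>x. x \<in> S \<Longrightarrow> grad f x = F x"
  shows "C1_on S f"
  unfolding C1_on_def using assms(1) continuous_on_eq[OF assms(2) assms(3)[symmetric]] by blast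

lemma C1_on_differentiable: "C1_on S f \<Longrightarrow> x \<in> S \<Longrightarrow> f differentiable (at x)"
  by (simp add: C1_on_def)

lemma C1_on_has_derivative:
  "C1_on S f \<Longrightarrow> x \<in> S \<Longrightarrow> (f has_derivative (\<lambda>h. grad f x \<bullet> h)) (at x)"
  by (simp add: C1_on_def has_derivative_grad)

lemma C1_on_imp_continuous_on: "C1_on S f \<Longrightarrow> continuous_on S f"
  unfolding C1_on_def
  by (meson continuous_at_imp_continuous_on differentiable_imp_continuous_within)

lemma C1_on_grad_continuous_on: "C1_on S f \<Longrightarrow> continuous_on S (grad f)"
  by (simp add: C1_on_def)

lemma C1_on_grad_component_continuous_on: "C1_on S f \<Longrightarrow> continuous_on S (\<lambda>x. grad f x $ i)"
  unfolding C1_on_def by (auto intro: continuous_intros)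

lemma C1_on_subset: "C1_on S f \<Longrightarrow> T \<subseteq> S \<Longrightarrow> C1_on T f"
  unfolding C1_on_def by (auto intro: continuous_on_subset)

lemma C1_on_cong:
  assumes "open S" and "\<And>x. x \<in> S \<Longrightarrow> f x = g x" and "C1_on S f"
  shows "C1_on S g"
proof (rule C1_onI[where F = "grad f"])
  fix x assume x: "x \<in> S"
  have "(g has_derivative (\<lambda>h. grad f x \<bullet> h)) (at x)"
    using has_derivative_transform_within_open[OF C1_on_has_derivative[OF assms(3) x] assms(1) x]
      assms(2) by blast
  then show "g differentiable (at x)" and "grad g x = grad f x"
    by (auto simp: differentiable_def intro: grad_eqI)
next
  show "continuous_on S (grad f)" using assms(3) by (rule C1_on_grad_continuous_on)
qed

lemma C1_on_const: "C1_on S (\<lambda>x. c)"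
proof -
  have "grad (\<lambda>x. c) x = 0" for x by (rule grad_eqI) simp
  then show ?thesis by (intro C1_onI[where F = "\<lambda>x. 0"]) simp_all
qed

lemma C1_on_add:
  assumes "C1_on S f" "C1_on S g"
  shows "C1_on S (\<lambda>x. f x + g x)"
proof (rule C1_onI[where F = "\<lambda>x. grad f x + grad g x"])
  fix x assume "x \<in> S"
  then have "f differentiable (at x)" "g differentiable (at x)"
    using assms by (simp_all add: C1_on_differentiable)
  then show "(\<lambda>x. f x + g x) differentiable (at x)" "grad (\<lambda>x. f x + g x) x = grad f x + grad g x"
    by (simp_all add: grad_add)
next
  show "continuous_on S (\<lambda>x. grad f x + grad g x)"
    using assms by (intro continuous_on_add C1_on_grad_continuous_on)
qed

lemma C1_on_mult:
  assumes "C1_on S f" "C1_on S g"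
  shows "C1_on S (\<lambda>x. f x * g x)"
proof (rule C1_onI[where F = "\<lambda>x. f x *\<^sub>R grad g x + g x *\<^sub>R grad f x"])
  fix x assume "x \<in> S"
  then have "f differentiable (at x)" "g differentiable (at x)"
    using assms by (simp_all add: C1_on_differentiable)
  then show "(\<lambda>x. f x * g x) differentiable (at x)"
    and "grad (\<lambda>x. f x * g x) x = f x *\<^sub>R grad g x + g x *\<^sub>R grad f x"
    by (simp_all add: grad_mult)
next
  show "continuous_on S (\<lambda>x. f x *\<^sub>R grad g x + g x *\<^sub>R grad f x)"
    using assms by (intro continuous_intros C1_on_imp_continuous_on C1_on_grad_continuous_on)
qed

lemma C1_on_inverse:
  assumes "C1_on S f" "\<And>x. x \<in> S \<Longrightarrow> f x \<noteq> 0"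
  shows "C1_on S (\<lambda>x. inverse (f x))"
proof (rule C1_onI[where F = "\<lambda>x. (- inverse (f x ^ 2)) *\<^sub>R grad f x"])
  fix x assume x: "x \<in> S"
  then have "f differentiable (at x)"
    using assms by (simp add: C1_on_differentiable)
  with assms(2)[OF x] show "(\<lambda>x. inverse (f x)) differentiable (at x)"
    and "grad (\<lambda>x. inverse (f x)) x = (- inverse (f x ^ 2)) *\<^sub>R grad f x"
    by (simp_all add: differentiable_inverse grad_inverse)
next
  show "continuous_on S (\<lambda>x. (- inverse (f x ^ 2)) *\<^sub>R grad f x)"
    using assms by (intro continuous_intros C1_on_imp_continuous_on C1_on_grad_continuous_on) auto
qed

lemma C1_on_divide:
  assumes "C1_on S f" "C1_on S g" "\<And>x. x \<in> S \<Longrightarrow> g x \<noteq> 0"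
  shows "C1_on S (\<lambda>x. f x / g x)"
  using C1_on_mult[OF assms(1) C1_on_inverse[OF assms(2,3)]] by (simp add: divide_inverse)

lemma C1_on_diff:
  assumes "C1_on S f" "C1_on S g"
  shows "C1_on S (\<lambda>x. f x - g x)"
  using C1_on_add[OF assms(1) C1_on_mult[OF C1_on_const[of S "-1"] assms(2)]] by simp

lemma C2_on_C1_on: "C2_on S f \<Longrightarrow> C1_on S f"
  and C2_on_C1_on_grad: "C2_on S f \<Longrightarrow> C1_on S (\<lambda>y. grad f y $ i)"
  by (simp_all add: C2_on_def)

lemma C2_on_divide:
  assumes "open S" and u: "C2_on S u" and P: "C2_on S P" and nz: "\<And>x. x \<in> S \<Longrightarrow> P x \<noteq> 0"
  shows "C2_on S (\<lambda>x. u x / P x)"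
proof -
  have "C1_on S (\<lambda>y. grad (\<lambda>x. u x / P x) y $ i)" for i
  proof (rule C1_on_cong[OF \<open>open S\<close>])
    show "C1_on S (\<lambda>y. (P y * grad u y $ i - u y * grad P y $ i) / (P y * P y))"
      by (intro C1_on_divide C1_on_diff C1_on_mult C2_on_C1_on C2_on_C1_on_grad u P) (use nz in auto)
    fix y assume y: "y \<in> S"
    show "(P y * grad u y $ i - u y * grad P y $ i) / (P y * P y) = grad (\<lambda>x. u x / P x) y $ i"
      unfolding grad_divide[OF C1_on_differentiable[OF C2_on_C1_on[OF u] y]
          C1_on_differentiable[OF C2_on_C1_on[OF P] y] nz[OF y]]
      by (simp add: power2_eq_square divide_simps)
  qed
  then show ?thesis
    using C1_on_divide[OF C2_on_C1_on[OF u] C2_on_C1_on[OF P] nz] by (simp add: C2_on_def)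
qed

section \<open>A \<open>C\<^sup>1\<close> step function\<close>

definition smooth_step :: "real \<Rightarrow> real" where
  "smooth_step t = (if t \<le> 1 then 0 else if t \<ge> 2 then 1 else 3*(t-1)^2 - 2*(t-1)^3)"

definition smooth_step' :: "real \<Rightarrow> real" where
  "smooth_step' t = max 0 (6*(t-1)*(2-t))"

lemma smooth_step'_eq_0: "t \<le> 1 \<or> t \<ge> 2 \<Longrightarrow> smooth_step' t = 0"
  by (auto simp: smooth_step'_def mult_nonpos_nonneg mult_nonneg_nonpos)

lemma smooth_step'_nonneg: "smooth_step' t \<ge> 0"
  by (simp add: smooth_step'_def)

lemma continuous_on_smooth_step': "continuous_on UNIV smooth_step'"
  unfolding smooth_step'_def by (intro continuous_intros)

lemma smooth_step_eq_0: "t \<le> 1 \<Longrightarrow> smooth_step t = 0"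
  and smooth_step_eq_1: "t \<ge> 2 \<Longrightarrow> smooth_step t = 1"
  by (simp_all add: smooth_step_def)

lemma DERIV_quadratic_remainder:
  fixes f :: "real \<Rightarrow> real"
  assumes "d > 0" "\<And>h. \<bar>h\<bar> < d \<Longrightarrow> \<bar>f (x+h) - f x - D*h\<bar> \<le> C*h^2"
  shows "DERIV f x :> D"
  unfolding DERIV_def LIM_eq
proof (intro allI impI)
  fix r :: real assume r: "r > 0"
  define s where "s = min d (r / (\<bar>C\<bar>+1))"
  have c1: "\<bar>C\<bar>+1 > 0" using abs_ge_zero[of C] by linarith
  have rc: "r / (\<bar>C\<bar>+1) > 0" by (rule divide_pos_pos[OF r c1])
  have s: "s > 0" unfolding s_def using assms(1) rc by simp
  show "\<exists>s>0. \<forall>h. h \<noteq> 0 \<and> norm (h - 0) < s \<longrightarrow> norm ((f (x + h) - f x) / h - D) < r"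
  proof (intro exI[of _ s] conjI allI impI s)
    fix h :: real assume h: "h \<noteq> 0 \<and> norm (h - 0) < s"
    have hs: "\<bar>h\<bar> < s" using h by simp
    have hd: "\<bar>h\<bar> < d" and hr0: "\<bar>h\<bar> < r / (\<bar>C\<bar>+1)" using hs unfolding s_def by simp_all
    have hp: "\<bar>h\<bar> > 0" using h by simp
    have hr: "\<bar>h\<bar> * (\<bar>C\<bar>+1) < r" using hr0 c1 by (simp add: less_divide_eq)
    have e: "(f (x + h) - f x) / h - D = (f (x+h) - f x - D*h) / h" using h by (simp add: field_simps)
    have "\<bar>f (x+h) - f x - D*h\<bar> \<le> C*h^2" using assms(2)[OF hd] .
    also have "C*h^2 \<le> ((\<bar>C\<bar>+1)*\<bar>h\<bar>)*\<bar>h\<bar>"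
    proof -
      have "h^2 = \<bar>h\<bar>*\<bar>h\<bar>" by (simp add: power2_eq_square)
      moreover have "C \<le> \<bar>C\<bar>+1" by simp
      ultimately show ?thesis by (simp add: mult_right_mono mult.assoc)
    qed
    also have "\<dots> < r * \<bar>h\<bar>" using hr hp by (simp add: mult.commute)
    finally have "\<bar>f (x+h) - f x - D*h\<bar> / \<bar>h\<bar> < r" using hp by (simp add: divide_less_eq)
    then show "norm ((f (x + h) - f x) / h - D) < r" unfolding e by (simp add: abs_divide)
  qed
qed

lemma has_real_derivative_smooth_step_1: "DERIV smooth_step 1 :> 0"
proof (rule DERIV_quadratic_remainder[where d=1 and C=3])
  fix h :: real assume h: "\<bar>h\<bar> < 1"
  show "\<bar>smooth_step (1 + h) - smooth_step 1 - 0 * h\<bar> \<le> 3 * h\<^sup>2"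
  proof (cases "h \<le> 0")
    case False
    have e: "smooth_step (1 + h) - smooth_step 1 - 0 * h = h^2 * (3 - 2*h)" using False h
      unfolding smooth_step_def by (simp add: power2_eq_square power3_eq_cube algebra_simps)
    have "0 \<le> h^2 * (3 - 2*h)" using h by simp
    moreover have "h^2 * (3 - 2*h) \<le> 3*h^2" using False by (simp add: algebra_simps)
    ultimately show ?thesis unfolding e by simp
  qed (simp add: smooth_step_def)
qed simp

lemma has_real_derivative_smooth_step_2: "DERIV smooth_step 2 :> 0"
proof (rule DERIV_quadratic_remainder[where d=1 and C=5])
  fix h :: real assume h: "\<bar>h\<bar> < 1"
  show "\<bar>smooth_step (2 + h) - smooth_step 2 - 0 * h\<bar> \<le> 5 * h\<^sup>2"
  proof (cases "h < 0")
    case True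
    have e: "smooth_step (2 + h) - smooth_step 2 - 0 * h = - (h^2 * (3 + 2*h))" using True h
      unfolding smooth_step_def by (simp add: power2_eq_square power3_eq_cube algebra_simps)
    have "0 \<le> h^2 * (3 + 2*h)" using h by simp
    moreover have "h^2 * (3 + 2*h) \<le> h^2 * 5" using h by (intro mult_left_mono) auto
    ultimately show ?thesis unfolding e by simp
  qed (simp add: smooth_step_def)
qed simp

lemma has_real_derivative_smooth_step: "DERIV smooth_step t :> smooth_step' t"
proof -
  consider "t < 1" | "t = 1" | "1 < t \<and> t < 2" | "t = 2" | "t > 2" by linarith
  then show ?thesis
  proof cases
    case 1
    have "DERIV smooth_step t :> 0"
      by (rule has_field_derivative_transform_within_open[where f="\<lambda>t. 0" and S="{..<1}"])
         (use 1 in \<open>auto simp: smooth_step_def\<close>)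
    then show ?thesis using 1 by (simp add: smooth_step'_eq_0)
  next
    case 3
    have "DERIV (\<lambda>t. 3*(t-1)^2 - 2*(t-1)^3) t :> 3*(2*(t-1)) - 2*(3*(t-1)^2)"
      by (auto intro!: derivative_eq_intros)
    then have "DERIV smooth_step t :> 3*(2*(t-1)) - 2*(3*(t-1)^2)"
      by (rule has_field_derivative_transform_within_open[where S="{1<..<2}"])
         (use 3 in \<open>auto simp: smooth_step_def\<close>)
    moreover have "smooth_step' t = 6*(t-1)*(2-t)"
      using 3 by (simp add: smooth_step'_def)
    moreover have "3*(2*(t-1)) - 2*(3*(t-1)^2) = 6*(t-1)*(2-t)"
      by (simp add: power2_eq_square algebra_simps)
    ultimately show ?thesis by simp
  next
    case 5
    have "DERIV smooth_step t :> 0"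
      by (rule has_field_derivative_transform_within_open[where f="\<lambda>t. 1" and S="{2<..}"])
         (use 5 in \<open>auto simp: smooth_step_def\<close>)
    then show ?thesis using 5 by (simp add: smooth_step'_eq_0)
  qed (simp_all add: has_real_derivative_smooth_step_1 has_real_derivative_smooth_step_2 smooth_step'_eq_0)
qed

lemma continuous_on_smooth_step: "continuous_on UNIV smooth_step"
  using has_real_derivative_smooth_step by (meson DERIV_isCont continuous_at_imp_continuous_on)

lemma smooth_step_bounds: "0 \<le> smooth_step t \<and> smooth_step t \<le> 1"
proof (cases "t \<le> 1 \<or> t \<ge> 2")
  case True then show ?thesis by (auto simp: smooth_step_def)
next
  case False
  define y where "y = t - 1"
  have y: "0 < y" "y < 1" using False by (auto simp: y_def)
  have e: "smooth_step t = y^2 * (3 - 2*y)" using False unfolding smooth_step_def y_def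
    by (simp add: power2_eq_square power3_eq_cube algebra_simps)
  have e2: "1 - y^2 * (3 - 2*y) = (1-y)^2 * (1 + 2*y)"
    by (simp add: power2_eq_square algebra_simps)
  have "0 \<le> y^2 * (3 - 2*y)" using y by simp
  moreover have "0 \<le> (1-y)^2 * (1 + 2*y)" using y by simp
  ultimately show ?thesis unfolding e using e2 by linarith
qed

section \<open>Integrals of derivatives of compactly supported functions\<close>

lemma mem_cbox_if_norm_le:
  fixes y :: "real^'n"
  assumes "norm y \<le> M"
  shows "y \<in> cbox (\<chi> j. - M) (\<chi> j. M)"
proof -
  have "- M \<le> y $ j \<and> y $ j \<le> M" for j
    using component_le_norm_cart[of y j] assms by linarith
  then show ?thesis unfolding mem_box_cart by simp
qed

lemma has_derivative_eq_0_outside_closed: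
  fixes g :: "real^'n \<Rightarrow> real"
  assumes "closed K" and g': "(g has_derivative (\<lambda>h. G \<bullet> h)) (at x)"
    and zero: "\<And>x. x \<notin> K \<Longrightarrow> g x = 0" and "x \<notin> K"
  shows "G = 0"
proof -
  have "((\<lambda>x. 0) has_derivative (\<lambda>h. 0)) (at x)" by simp
  then have "(g has_derivative (\<lambda>h. 0)) (at x)"
    by (rule has_derivative_transform_within_open[where s="- K"])
       (use assms in \<open>auto simp: open_Compl\<close>)
  then have "(\<lambda>h. G \<bullet> h) = (\<lambda>h. 0)" using g' has_derivative_unique by blast
  then have "G \<bullet> G = 0" by meson
  then show ?thesis by simp
qed

lemma integral_translate_eq_of_support:
  fixes g :: "real^'n \<Rightarrow> real" and e :: "real^'n"
  assumes gc: "continuous_on UNIV g" and supp: "\<And>x. R < norm x \<Longrightarrow> g x = 0"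
    and e: "norm e \<le> 1" and s: "\<bar>s\<bar> \<le> 1"
  shows "integral (cbox (\<chi> j. - (R+1)) (\<chi> j. R+1)) (\<lambda>t. g (t + s *\<^sub>R e))
       = integral (cbox (\<chi> j. - (R+2)) (\<chi> j. R+2)) g"
proof -
  define B where "B = cbox (\<chi> j. - (R+1)) (\<chi> j::'n. R+1)"
  define B2 where "B2 = cbox (\<chi> j. - (R+2)) (\<chi> j::'n. R+2)"
  have se: "norm (s *\<^sub>R e) \<le> 1" using e s by (simp add: mult_le_one)
  have "(g has_integral integral B2 g) B2"
    unfolding B2_def by (intro integrable_integral integrable_continuous continuous_on_subset[OF gc]) auto
  from has_integral_affinity[OF this[unfolded B2_def], of 1 "s *\<^sub>R e"]
  have on_B2: "((\<lambda>t. g (t + s *\<^sub>R e)) has_integral integral B2 g) ((\<lambda>x. x - s *\<^sub>R e) ` B2)"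
    by (simp add: B2_def)
  have c: "continuous_on B (\<lambda>t. g (t + s *\<^sub>R e))"
    by (intro continuous_on_compose2[OF gc] continuous_intros) auto
  have on_B: "((\<lambda>t. g (t + s *\<^sub>R e)) has_integral integral B (\<lambda>t. g (t + s *\<^sub>R e))) B"
    using integrable_continuous[OF c[unfolded B_def]] unfolding B_def by (rule integrable_integral)
  have "B \<subseteq> (\<lambda>x. x - s *\<^sub>R e) ` B2"
  proof
    fix t assume t: "t \<in> B"
    have se_j: "\<bar>(s *\<^sub>R e) $ j\<bar> \<le> 1" for j
      using component_le_norm_cart[of "s *\<^sub>R e" j] se by linarith
    have t_j: "- (R+1) \<le> t $ j \<and> t $ j \<le> R+1" for j using t unfolding B_def mem_box_cart by simp
    have "- (R+2) \<le> (t + s *\<^sub>R e) $ j \<and> (t + s *\<^sub>R e) $ j \<le> R+2" for j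
      using se_j[of j] t_j[of j] unfolding abs_le_iff vector_add_component by linarith
    then have "t + s *\<^sub>R e \<in> B2" unfolding B2_def mem_box_cart by simp
    then show "t \<in> (\<lambda>x. x - s *\<^sub>R e) ` B2" by (auto intro: image_eqI[where x="t + s *\<^sub>R e"])
  qed
  moreover have "g (t + s *\<^sub>R e) = 0" if "t \<notin> B" for t
  proof (rule supp)
    have "\<not> norm t \<le> R + 1" using that mem_cbox_if_norm_le unfolding B_def by blast
    then show "R < norm (t + s *\<^sub>R e)" using norm_triangle_ineq4[of "t + s *\<^sub>R e" "s *\<^sub>R e"] se by simp
  qed
  ultimately have "((\<lambda>t. g (t + s *\<^sub>R e)) has_integral integral B (\<lambda>t. g (t + s *\<^sub>R e)))
      ((\<lambda>x. x - s *\<^sub>R e) ` B2)"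
    by (intro has_integral_on_superset[OF on_B]) auto
  then show ?thesis using on_B2 has_integral_unique unfolding B_def B2_def by blast
qed

lemma has_real_derivative_integral_translate:
  fixes g :: "real^'n \<Rightarrow> real" and Dg :: "real^'n \<Rightarrow> real^'n"
  assumes g': "\<And>x. (g has_derivative (\<lambda>h. Dg x \<bullet> h)) (at x)"
    and cont: "continuous_on UNIV (\<lambda>x. Dg x $ i)"
  shows "((\<lambda>s. integral (cbox a b) (\<lambda>t. g (t + s *\<^sub>R axis i 1))) has_real_derivative
           integral (cbox a b) (\<lambda>t. Dg t $ i)) (at 0)"
proof -
  define e :: "real^'n" where "e = axis i 1"
  define U where "U = {-1<..<(1::real)}"
  have gc: "continuous_on UNIV g"
    using g' by (meson continuous_at_imp_continuous_on differentiable_def differentiable_imp_continuous_within)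
  have "((\<lambda>s. integral (cbox a b) (\<lambda>t. g (t + s *\<^sub>R e))) has_field_derivative
      integral (cbox a b) (\<lambda>t. Dg (t + 0 *\<^sub>R e) $ i)) (at 0 within U)"
  proof (rule leibniz_rule_field_derivative[where fx="\<lambda>s t. Dg (t + s *\<^sub>R e) $ i"])
    fix s t
    have "((\<lambda>s. t + s *\<^sub>R e) has_derivative (\<lambda>h. h *\<^sub>R e)) (at s within U)"
      by (auto intro!: derivative_eq_intros)
    from has_derivative_compose[OF this g']
    have "((\<lambda>s. g (t + s *\<^sub>R e)) has_derivative (\<lambda>h. Dg (t + s *\<^sub>R e) \<bullet> (h *\<^sub>R e))) (at s within U)"
      by (simp add: o_def)
    moreover have "(\<lambda>h. Dg (t + s *\<^sub>R e) \<bullet> (h *\<^sub>R e)) = (*) (Dg (t + s *\<^sub>R e) $ i)"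
      by (auto simp: e_def inner_axis)
    ultimately show "((\<lambda>s. g (t + s *\<^sub>R e)) has_field_derivative Dg (t + s *\<^sub>R e) $ i) (at s within U)"
      by (simp add: has_field_derivative_def)
  next
    fix s
    show "(\<lambda>t. g (t + s *\<^sub>R e)) integrable_on cbox a b"
      by (rule integrable_continuous, intro continuous_on_compose2[OF gc] continuous_intros) auto
  next
    have "continuous_on (U \<times> cbox a b) (\<lambda>p. Dg (snd p + fst p *\<^sub>R e) $ i)"
      by (intro continuous_on_compose2[OF cont] continuous_intros) auto
    then show "continuous_on (U \<times> cbox a b) (\<lambda>(s, t). Dg (t + s *\<^sub>R e) $ i)"
      by (simp add: case_prod_unfold)
  qed (auto simp: U_def)
  moreover have "at (0::real) within U = at 0" unfolding U_def by (rule at_within_open) auto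
  ultimately show ?thesis by (simp add: e_def)
qed

text \<open>The integral of a translate of \<open>g\<close> is independent of the shift; differentiating it
  with respect to the shift gives the integral of the partial derivative.\<close>

lemma has_integral_partial_derivative_compact_support:
  fixes g :: "real^'n \<Rightarrow> real" and Dg :: "real^'n \<Rightarrow> real^'n"
  assumes K: "compact K"
    and g': "\<And>x. (g has_derivative (\<lambda>h. Dg x \<bullet> h)) (at x)"
    and zero: "\<And>x. x \<notin> K \<Longrightarrow> g x = 0"
    and cont: "continuous_on UNIV (\<lambda>x. Dg x $ i)"
  shows "((\<lambda>x. Dg x $ i) has_integral 0) UNIV"
proof -
  obtain R where R: "\<And>x. x \<in> K \<Longrightarrow> norm x \<le> R"
    using compact_imp_bounded[OF K] unfolding bounded_iff by blast
  define B where "B = cbox (\<chi> j. - (R+1)) (\<chi> j::'n. R+1)"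
  define J where "J = integral (cbox (\<chi> j. - (R+2)) (\<chi> j::'n. R+2)) g"
  have gc: "continuous_on UNIV g"
    using g' by (meson continuous_at_imp_continuous_on differentiable_def differentiable_imp_continuous_within)
  have shift_invariant: "integral B (\<lambda>t. g (t + s *\<^sub>R axis i 1)) = J" if "\<bar>s\<bar> < 1" for s
    unfolding B_def J_def
  proof (rule integral_translate_eq_of_support[OF gc])
    show "g x = 0" if "R < norm x" for x using that R zero by (meson not_le)
  qed (use that in auto)
  have "((\<lambda>s. integral B (\<lambda>t. g (t + s *\<^sub>R axis i 1))) has_real_derivative 0) (at 0)"
  proof (rule has_field_derivative_transform_within[where f="\<lambda>s. J" and d=1])
    show "((\<lambda>s. J) has_real_derivative 0) (at 0)" by simp
  qed (use shift_invariant in auto)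
  then have "integral B (\<lambda>t. Dg t $ i) = 0"
    using DERIV_unique has_real_derivative_integral_translate[OF g' cont] unfolding B_def by blast
  moreover have "(\<lambda>t. Dg t $ i) integrable_on B" unfolding B_def
    by (rule integrable_continuous) (use cont continuous_on_subset in blast)
  ultimately have on_B: "((\<lambda>t. Dg t $ i) has_integral 0) B" by (simp add: has_integral_integral)
  have "K \<subseteq> B"
  proof
    fix x assume "x \<in> K"
    then have "norm x \<le> R + 1" using R by force
    then show "x \<in> B" unfolding B_def by (rule mem_cbox_if_norm_le)
  qed
  then have "Dg x = 0" if "x \<notin> B" for x
    using has_derivative_eq_0_outside_closed[OF compact_imp_closed[OF K] g' zero] that by blast
  then show ?thesis by (intro has_integral_on_superset[OF on_B]) auto
qed

lemma has_derivative_smooth_step_cutoff: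
  fixes \<rho> :: "real^'n \<Rightarrow> real"
  assumes "\<rho> differentiable (at x)" and "\<epsilon> > 0"
  shows "((\<lambda>y. smooth_step (- \<rho> y / \<epsilon>)) has_derivative
           (\<lambda>h. (smooth_step' (- \<rho> x / \<epsilon>) * (-1/\<epsilon>)) * (grad \<rho> x \<bullet> h))) (at x)"
proof -
  have "((\<lambda>y. - \<rho> y / \<epsilon>) has_derivative (\<lambda>h. - (grad \<rho> x \<bullet> h) / \<epsilon>)) (at x)"
    using has_derivative_grad[OF assms(1)] assms(2) by (auto intro!: derivative_eq_intros)
  moreover have "(smooth_step has_derivative (*) (smooth_step' (- \<rho> x / \<epsilon>))) (at (- \<rho> x / \<epsilon>))"
    using has_real_derivative_smooth_step by (simp add: has_field_derivative_def)
  ultimately have "((\<lambda>y. smooth_step (- \<rho> y / \<epsilon>)) has_derivative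
      (\<lambda>h. smooth_step' (- \<rho> x / \<epsilon>) * (- (grad \<rho> x \<bullet> h) / \<epsilon>))) (at x)"
    by (rule has_derivative_compose[THEN has_derivative_eq_rhs]) (simp add: o_def)
  then show ?thesis by (simp add: mult.assoc)
qed

lemma smooth_step_cutoff_eq_0:
  fixes t \<epsilon> :: real
  assumes "\<epsilon> > 0" and "- \<epsilon> < t"
  shows "smooth_step (- t / \<epsilon>) = 0" and "smooth_step' (- t / \<epsilon>) = 0"
proof -
  have "- t / \<epsilon> \<le> 1" using assms by (simp add: divide_le_eq le_divide_eq)
  then show "smooth_step (- t / \<epsilon>) = 0" "smooth_step' (- t / \<epsilon>) = 0"
    by (simp_all add: smooth_step_eq_0 smooth_step'_eq_0)
qed

lemma compact_sublevel_le:
  fixes \<rho> :: "'a::heine_borel \<Rightarrow> real"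
  assumes "bounded {x. \<rho> x < 0}" and "continuous_on UNIV \<rho>" and "\<epsilon> > 0"
  shows "compact {x. \<rho> x \<le> - \<epsilon>}"
  unfolding compact_eq_bounded_closed
proof
  show "bounded {x. \<rho> x \<le> - \<epsilon>}" by (rule bounded_subset[OF assms(1)]) (use assms(3) in auto)
  show "closed {x. \<rho> x \<le> - \<epsilon>}" using assms(2) by (simp add: closed_Collect_le)
qed

text \<open>With \<open>\<psi>\<^sub>\<epsilon> = smooth_step (-\<rho>/\<epsilon>)\<close>, the product \<open>\<psi>\<^sub>\<epsilon> h\<close> extended by zero outside \<open>\<Omega>\<close>
  is \<open>C\<^sup>1\<close> with compact support, so its partial derivatives integrate to zero.\<close>

lemma has_integral_cutoff_partial_derivative:
  fixes \<rho> h :: "real^'n \<Rightarrow> real"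
  assumes \<Omega>: "\<Omega> = {x. \<rho> x < 0}" and bd: "bounded \<Omega>"
    and \<rho>: "C1_on UNIV \<rho>" and h: "C1_on \<Omega> h" and \<epsilon>: "\<epsilon> > 0"
  shows "((\<lambda>x. smooth_step (- \<rho> x / \<epsilon>) * grad h x $ i
              - smooth_step' (- \<rho> x / \<epsilon>) / \<epsilon> * (grad \<rho> x $ i * h x)) has_integral 0) \<Omega>"
proof -
  have \<rho>c: "continuous_on UNIV \<rho>" using C1_on_imp_continuous_on[OF \<rho>] .
  have op: "open \<Omega>" unfolding \<Omega> using \<rho>c by (simp add: open_Collect_less)
  define V where "V = {x. - \<epsilon> < \<rho> x}"
  have opV: "open V" unfolding V_def using \<rho>c by (simp add: open_Collect_less)
  have \<Omega>V: "\<Omega> \<union> V = UNIV" using \<epsilon> by (auto simp: \<Omega> V_def)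
  define K where "K = {x. \<rho> x \<le> - \<epsilon>}"
  have K: "compact K"
    unfolding K_def using compact_sublevel_le[OF bd[unfolded \<Omega>] \<rho>c \<epsilon>] .
  have cutoff_V: "smooth_step (- \<rho> x / \<epsilon>) = 0" "smooth_step' (- \<rho> x / \<epsilon>) = 0" if "x \<in> V" for x
    using smooth_step_cutoff_eq_0[OF \<epsilon>] that by (simp_all add: V_def)
  note cutoff_V = cutoff_V cutoff_V[simplified] \<comment> \<open>also in simp normal form \<open>- (\<rho> x / \<epsilon>)\<close>\<close>
  define g where "g x = (if x \<in> \<Omega> then smooth_step (- \<rho> x / \<epsilon>) * h x else 0)" for x
  define Dg where "Dg x = (if x \<in> \<Omega> then smooth_step (- \<rho> x / \<epsilon>) *\<^sub>R grad h x
      + (h x * (smooth_step' (- \<rho> x / \<epsilon>) * (-1/\<epsilon>))) *\<^sub>R grad \<rho> x else 0)" for x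
  have "((\<lambda>x. Dg x $ i) has_integral 0) UNIV"
  proof (rule has_integral_partial_derivative_compact_support[OF K, where g=g])
    fix x
    show "(g has_derivative (\<lambda>h. Dg x \<bullet> h)) (at x)"
    proof (cases "x \<in> \<Omega>")
      case True
      have "((\<lambda>y. smooth_step (- \<rho> y / \<epsilon>) * h y) has_derivative (\<lambda>v. Dg x \<bullet> v)) (at x)"
        using has_derivative_mult[OF has_derivative_smooth_step_cutoff[OF C1_on_differentiable[OF \<rho> UNIV_I] \<epsilon>]
            C1_on_has_derivative[OF h True]]
        by (rule has_derivative_eq_rhs) (use True in \<open>auto simp: Dg_def inner_add_left algebra_simps\<close>)
      then show ?thesis
        by (rule has_derivative_transform_within_open[OF _ op True]) (simp add: g_def)
    next
      case False
      then have "x \<in> V" using \<Omega>V by blast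
      have "((\<lambda>y. 0) has_derivative (\<lambda>h. 0)) (at x)" by simp
      then have "(g has_derivative (\<lambda>h. 0)) (at x)"
        by (rule has_derivative_transform_within_open[OF _ opV \<open>x \<in> V\<close>]) (simp add: g_def cutoff_V)
      then show ?thesis using False by (simp add: Dg_def)
    qed
  next
    show "g x = 0" if "x \<notin> K" for x
      using that \<Omega>V cutoff_V by (auto simp: g_def K_def V_def)
  next
    have "continuous_on \<Omega> (\<lambda>x. smooth_step (- \<rho> x / \<epsilon>) * grad h x $ i
        + (h x * (smooth_step' (- \<rho> x / \<epsilon>) * (-1/\<epsilon>))) * grad \<rho> x $ i)"
      by (intro continuous_intros continuous_on_compose2[OF continuous_on_smooth_step]
          continuous_on_compose2[OF continuous_on_smooth_step'] continuous_on_subset[OF \<rho>c]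
          continuous_on_subset[OF C1_on_grad_component_continuous_on[OF \<rho>]]
          C1_on_grad_component_continuous_on[OF h] C1_on_imp_continuous_on[OF h])
         (use \<epsilon> in auto)
    then have "continuous_on (\<Omega> \<union> V) (\<lambda>x. if x \<in> \<Omega> then Dg x $ i else 0)"
      by (intro continuous_on_cases_local_open continuous_on_const)
         (auto simp: \<Omega>V op opV open_openin[symmetric] Dg_def cutoff_V intro: continuous_on_eq)
    then show "continuous_on UNIV (\<lambda>x. Dg x $ i)"
      unfolding \<Omega>V by (rule continuous_on_eq) (simp add: Dg_def)
  qed
  moreover have "(\<lambda>x. Dg x $ i) = (\<lambda>x. if x \<in> \<Omega> then smooth_step (- \<rho> x / \<epsilon>) * grad h x $ i
      - smooth_step' (- \<rho> x / \<epsilon>) / \<epsilon> * (grad \<rho> x $ i * h x) else 0)"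
    by (auto simp: Dg_def algebra_simps)
  ultimately show ?thesis by (simp only: has_integral_restrict_UNIV)
qed

lemma has_integral_cutoff_divergence:
  fixes \<rho> :: "real^'n \<Rightarrow> real" and H :: "real^'n \<Rightarrow> real^'n"
  assumes "\<Omega> = {x. \<rho> x < 0}" and "bounded \<Omega>"
    and "C1_on UNIV \<rho>" and "\<And>i. C1_on \<Omega> (\<lambda>y. H y $ i)" and "\<epsilon> > 0"
  shows "((\<lambda>x. smooth_step (- \<rho> x / \<epsilon>) * divergence H x
              - smooth_step' (- \<rho> x / \<epsilon>) / \<epsilon> * (grad \<rho> x \<bullet> H x)) has_integral 0) \<Omega>"
proof -
  define F where "F i x = smooth_step (- \<rho> x / \<epsilon>) * grad (\<lambda>y. H y $ i) x $ i
      - smooth_step' (- \<rho> x / \<epsilon>) / \<epsilon> * (grad \<rho> x $ i * H x $ i)" for i x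
  have "(F i has_integral 0) \<Omega>" for i
    unfolding F_def by (rule has_integral_cutoff_partial_derivative[OF assms(1-3) assms(4)[of i] assms(5)])
  then have "((\<lambda>x. \<Sum>i\<in>UNIV. smooth_step (- \<rho> x / \<epsilon>) * grad (\<lambda>y. H y $ i) x $ i
      - smooth_step' (- \<rho> x / \<epsilon>) / \<epsilon> * (grad \<rho> x $ i * H x $ i)) has_integral (\<Sum>i\<in>UNIV. 0)) \<Omega>"
    using has_integral_sum[of UNIV F "\<lambda>i. 0" \<Omega>] by (simp add: F_def)
  then show ?thesis
    by (simp add: divergence_eq_sum_grad inner_vec_def sum_subtractf sum_distrib_left)
qed

lemma frontier_sublevel_subset:
  fixes \<rho> :: "'a::topological_space \<Rightarrow> real"
  assumes "continuous_on UNIV \<rho>"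
  shows "frontier {x. \<rho> x < 0} \<subseteq> {x. \<rho> x = 0}"
proof -
  have "closure {x. \<rho> x < 0} \<subseteq> {x. \<rho> x \<le> 0}"
    by (rule closure_minimal) (auto intro: closed_Collect_le[OF assms continuous_on_const])
  moreover have "interior {x. \<rho> x < 0} = {x. \<rho> x < 0}"
    using assms by (simp add: interior_open open_Collect_less)
  ultimately show ?thesis by (auto simp: frontier_def)
qed

lemma inner_grad_small_near_frontier:
  fixes \<rho> :: "real^'n \<Rightarrow> real" and Hc :: "real^'n \<Rightarrow> real^'n"
  assumes \<Omega>: "\<Omega> = {x. \<rho> x < 0}" and bd: "bounded \<Omega>"
    and \<rho>: "C1_on UNIV \<rho>" and nz: "\<And>x. \<rho> x = 0 \<Longrightarrow> grad \<rho> x \<noteq> 0"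
    and Hc: "continuous_on (closure \<Omega>) Hc"
    and no_flux: "\<And>x. x \<in> frontier \<Omega> \<Longrightarrow> Hc x \<bullet> grad \<rho> x = 0"
    and \<delta>: "\<delta> > 0"
  obtains e where "e > 0"
    and "\<And>x. x \<in> \<Omega> \<Longrightarrow> \<rho> x > - e \<Longrightarrow> \<bar>Hc x \<bullet> grad \<rho> x\<bar> \<le> \<delta> * (grad \<rho> x \<bullet> grad \<rho> x)"
proof -
  have \<rho>c: "continuous_on UNIV \<rho>" using C1_on_imp_continuous_on[OF \<rho>] .
  define C where "C = {x \<in> closure \<Omega>. \<delta> * (grad \<rho> x \<bullet> grad \<rho> x) \<le> \<bar>Hc x \<bullet> grad \<rho> x\<bar>}"
  have "closed C" unfolding C_def
    by (intro continuous_on_closed_Collect_le continuous_intros Hc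
        continuous_on_subset[OF C1_on_grad_continuous_on[OF \<rho>]]) auto
  moreover have "C = closure \<Omega> \<inter> C" by (auto simp: C_def)
  ultimately have C: "compact C" using bd by (metis compact_Int_closed compact_closure)
  \<comment> \<open>\<open>C\<close> is a compact subset of \<open>\<Omega>\<close>, so \<open>\<rho>\<close> stays below some \<open>-e\<close> on it\<close>
  have C\<Omega>: "C \<subseteq> \<Omega>"
  proof
    fix x assume x: "x \<in> C"
    show "x \<in> \<Omega>"
    proof (rule ccontr)
      assume "x \<notin> \<Omega>"
      then have fr: "x \<in> frontier \<Omega>" using x interior_subset by (auto simp: C_def frontier_def)
      then have "\<rho> x = 0" using frontier_sublevel_subset[OF \<rho>c] \<Omega> by blast
      then have "\<delta> * (grad \<rho> x \<bullet> grad \<rho> x) > 0" using nz \<delta> by simp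
      then show False using x no_flux[OF fr] by (simp add: C_def)
    qed
  qed
  show thesis
  proof (cases "C = {}")
    case True
    show thesis
    proof (rule that[of 1])
      fix x assume "x \<in> \<Omega>"
      then have "x \<notin> C" "x \<in> closure \<Omega>" using True closure_subset by auto
      then show "\<bar>Hc x \<bullet> grad \<rho> x\<bar> \<le> \<delta> * (grad \<rho> x \<bullet> grad \<rho> x)" by (auto simp: C_def)
    qed simp
  next
    case False
    obtain m where m: "m \<in> C" "\<And>y. y \<in> C \<Longrightarrow> \<rho> y \<le> \<rho> m"
      using compact_attains_sup[OF compact_continuous_image[OF continuous_on_subset[OF \<rho>c] C]] False
      by auto
    show thesis
    proof (rule that[of "- \<rho> m"])
      show "- \<rho> m > 0" using m(1) C\<Omega> \<Omega> by auto
      fix x assume x: "x \<in> \<Omega>" "\<rho> x > - (- \<rho> m)"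
      then have "x \<notin> C" using m(2) by force
      then show "\<bar>Hc x \<bullet> grad \<rho> x\<bar> \<le> \<delta> * (grad \<rho> x \<bullet> grad \<rho> x)"
        using x closure_subset by (auto simp: C_def)
    qed
  qed
qed

section \<open>The divergence theorem without normal flux\<close>

lemma integrable_on_bounded_continuous:
  fixes f :: "'a::euclidean_space \<Rightarrow> real"
  assumes S: "S \<in> lmeasurable" and "continuous_on S f" and "\<And>x. x \<in> S \<Longrightarrow> \<bar>f x\<bar> \<le> M"
  shows "f integrable_on S"
proof (rule measurable_bounded_by_integrable_imp_integrable_real)
  show "S \<in> sets lebesgue" using S by blast
  then show "f \<in> borel_measurable (lebesgue_on S)"
    by (rule continuous_imp_measurable_on_sets_lebesgue[OF assms(2)])
qed (use integrable_on_const[OF S] assms(3) in auto)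

lemma abs_smooth_step_mult_le: "\<bar>smooth_step t * a\<bar> \<le> \<bar>a\<bar>"
  using smooth_step_bounds[of t] by (simp add: abs_mult mult_left_le_one_le)

lemma integrable_on_cutoff_mult:
  fixes \<rho> d :: "real^'n \<Rightarrow> real"
  assumes "\<Omega> \<in> lmeasurable" and "continuous_on \<Omega> \<rho>" and "continuous_on \<Omega> d"
    and "\<And>x. x \<in> \<Omega> \<Longrightarrow> \<bar>d x\<bar> \<le> M"
  shows "(\<lambda>x. smooth_step (- \<rho> x / \<epsilon>) * d x) integrable_on \<Omega>"
proof (rule integrable_on_bounded_continuous[OF assms(1)])
  have "continuous_on \<Omega> (\<lambda>x. - \<rho> x / \<epsilon>)"
    unfolding divide_inverse by (intro continuous_intros assms(2))
  then have "continuous_on \<Omega> (\<lambda>x. smooth_step (- \<rho> x / \<epsilon>))"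
    by (rule continuous_on_compose2[OF continuous_on_smooth_step]) auto
  then show "continuous_on \<Omega> (\<lambda>x. smooth_step (- \<rho> x / \<epsilon>) * d x)"
    by (intro continuous_on_mult assms(3))
  show "\<bar>smooth_step (- \<rho> x / \<epsilon>) * d x\<bar> \<le> M" if "x \<in> \<Omega>" for x
    using abs_smooth_step_mult_le assms(4)[OF that] by (rule order_trans)
qed

lemma tendsto_integral_cutoff:
  fixes \<rho> d :: "real^'n \<Rightarrow> real"
  assumes \<Omega>: "\<Omega> = {x. \<rho> x < 0}" "\<Omega> \<in> lmeasurable" and "continuous_on \<Omega> \<rho>" and "continuous_on \<Omega> d"
    and d: "\<And>x. x \<in> \<Omega> \<Longrightarrow> \<bar>d x\<bar> \<le> M"
    and e: "e \<longlonglongrightarrow> 0" "\<And>k. e k > 0"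
  shows "(\<lambda>k. integral \<Omega> (\<lambda>x. smooth_step (- \<rho> x / e k) * d x)) \<longlonglongrightarrow> integral \<Omega> d"
proof (rule dominated_convergence(2)[where h="\<lambda>x. M"])
  show "(\<lambda>x. smooth_step (- \<rho> x / e k) * d x) integrable_on \<Omega>" for k
    by (rule integrable_on_cutoff_mult[OF \<Omega>(2) assms(3,4) d])
  show "(\<lambda>x. M) integrable_on \<Omega>" using integrable_on_const[OF \<Omega>(2)] .
  show "norm (smooth_step (- \<rho> x / e k) * d x) \<le> M" if "x \<in> \<Omega>" for k x
    using order_trans[OF abs_smooth_step_mult_le d[OF that]] by simp
next
  fix x assume "x \<in> \<Omega>"
  then have "- \<rho> x / 2 > 0" by (simp add: \<Omega>)
  then have "eventually (\<lambda>k. e k < - \<rho> x / 2) sequentially" by (rule order_tendstoD(2)[OF e(1)])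
  then have "eventually (\<lambda>k. smooth_step (- \<rho> x / e k) * d x = d x) sequentially"
  proof eventually_elim
    case (elim k)
    then have "2 * e k \<le> - \<rho> x" by simp
    then have "2 \<le> - \<rho> x / e k" using e(2)[of k] by (simp only: le_divide_eq) simp
    then show ?case by (simp add: smooth_step_eq_1)
  qed
  then show "(\<lambda>k. smooth_step (- \<rho> x / e k) * d x) \<longlonglongrightarrow> d x" by (rule tendsto_eventually)
qed

lemma continuous_on_divergence:
  assumes "\<And>i. C1_on S (\<lambda>y. H y $ i)"
  shows "continuous_on S (divergence H)"
proof -
  have "divergence H = (\<lambda>x. \<Sum>i\<in>UNIV. grad (\<lambda>y. H y $ i) x $ i)"
    by (simp add: divergence_eq_sum_grad fun_eq_iff)
  then show ?thesis by (simp add: continuous_on_sum C1_on_grad_component_continuous_on assms)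
qed

lemma has_integral_cutoff_flux:
  fixes \<rho> :: "real^'n \<Rightarrow> real" and H :: "real^'n \<Rightarrow> real^'n"
  assumes \<Omega>: "\<Omega> = {x. \<rho> x < 0}" and bd: "bounded \<Omega>"
    and \<rho>: "C1_on UNIV \<rho>" and H: "\<And>i. C1_on \<Omega> (\<lambda>y. H y $ i)" and \<epsilon>: "\<epsilon> > 0"
    and div_bound: "\<And>x. x \<in> \<Omega> \<Longrightarrow> \<bar>divergence H x\<bar> \<le> M"
  shows "((\<lambda>x. smooth_step' (- \<rho> x / \<epsilon>) / \<epsilon> * (grad \<rho> x \<bullet> H x))
           has_integral integral \<Omega> (\<lambda>x. smooth_step (- \<rho> x / \<epsilon>) * divergence H x)) \<Omega>"
proof -
  have \<rho>c: "continuous_on UNIV \<rho>" using C1_on_imp_continuous_on[OF \<rho>] .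
  have "\<Omega> \<in> lmeasurable"
    using bd \<rho>c by (simp add: \<Omega> lmeasurable_open open_Collect_less)
  then have "(\<lambda>x. smooth_step (- \<rho> x / \<epsilon>) * divergence H x) integrable_on \<Omega>"
    by (rule integrable_on_cutoff_mult[OF _ continuous_on_subset[OF \<rho>c] continuous_on_divergence[OF H] div_bound])
       auto
  from has_integral_diff[OF integrable_integral[OF this] has_integral_cutoff_divergence[OF \<Omega> bd \<rho> H \<epsilon>]]
  show ?thesis by simp
qed

lemma boundary_layer_integral_bounded:
  fixes \<rho> :: "real^'n \<Rightarrow> real"
  assumes \<Omega>: "\<Omega> = {x. \<rho> x < 0}" and bd: "bounded \<Omega>" and \<rho>: "C2_on UNIV \<rho>"
  obtains L where
    "\<And>\<epsilon>. \<epsilon> > 0 \<Longrightarrow> (\<lambda>x. smooth_step' (- \<rho> x / \<epsilon>) / \<epsilon> * (grad \<rho> x \<bullet> grad \<rho> x)) integrable_on \<Omega>"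
    and "\<And>\<epsilon>. \<epsilon> > 0 \<Longrightarrow> integral \<Omega> (\<lambda>x. smooth_step' (- \<rho> x / \<epsilon>) / \<epsilon> * (grad \<rho> x \<bullet> grad \<rho> x)) \<le> L"
proof -
  have \<rho>1: "C1_on UNIV \<rho>" and \<rho>2: "\<And>i. C1_on \<Omega> (\<lambda>y. grad \<rho> y $ i)"
    using \<rho> by (auto simp: C2_on_def intro: C1_on_subset)
  have \<rho>c: "continuous_on UNIV \<rho>" using C1_on_imp_continuous_on[OF \<rho>1] .
  have \<Omega>m: "\<Omega> \<in> lmeasurable"
    using bd \<rho>c by (simp add: \<Omega> lmeasurable_open open_Collect_less)
  have "continuous_on UNIV (divergence (grad \<rho>))"
    using \<rho> by (intro continuous_on_divergence) (simp add: C2_on_def)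
  then obtain M where M: "\<And>x. x \<in> closure \<Omega> \<Longrightarrow> \<bar>divergence (grad \<rho>) x\<bar> \<le> M"
    using continuous_on_compact_bound[OF compact_closure[THEN iffD2, OF bd]
        continuous_on_subset[OF _ subset_UNIV]] by (metis real_norm_def)
  then have M\<Omega>: "\<And>x. x \<in> \<Omega> \<Longrightarrow> \<bar>divergence (grad \<rho>) x\<bar> \<le> M"
    using closure_subset by blast
  note flux = has_integral_cutoff_flux[OF \<Omega> bd \<rho>1 \<rho>2 _ M\<Omega>]
  show thesis
  proof (rule that[of "integral \<Omega> (\<lambda>x. M)"])
    fix \<epsilon> :: real assume \<epsilon>: "\<epsilon> > 0"
    show "(\<lambda>x. smooth_step' (- \<rho> x / \<epsilon>) / \<epsilon> * (grad \<rho> x \<bullet> grad \<rho> x)) integrable_on \<Omega>"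
      using flux[OF \<epsilon>] by blast
    have "integral \<Omega> (\<lambda>x. smooth_step (- \<rho> x / \<epsilon>) * divergence (grad \<rho>) x) \<le> integral \<Omega> (\<lambda>x. M)"
    proof (rule integral_le)
      show "(\<lambda>x. smooth_step (- \<rho> x / \<epsilon>) * divergence (grad \<rho>) x) integrable_on \<Omega>"
        by (rule integrable_on_cutoff_mult[OF \<Omega>m continuous_on_subset[OF \<rho>c]
              continuous_on_divergence[OF \<rho>2] M\<Omega>]) auto
      show "(\<lambda>x. M) integrable_on \<Omega>" using integrable_on_const[OF \<Omega>m] .
      show "smooth_step (- \<rho> x / \<epsilon>) * divergence (grad \<rho>) x \<le> M" if "x \<in> \<Omega>" for x
        using abs_smooth_step_mult_le[of "- \<rho> x / \<epsilon>" "divergence (grad \<rho>) x"] M\<Omega>[OF that] by linarith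
    qed
    then show "integral \<Omega> (\<lambda>x. smooth_step' (- \<rho> x / \<epsilon>) / \<epsilon> * (grad \<rho> x \<bullet> grad \<rho> x))
        \<le> integral \<Omega> (\<lambda>x. M)"
      using integral_unique[OF flux[OF \<epsilon>]] by simp
  qed
qed

lemma abs_layer_term_le:
  fixes \<epsilon> t a b \<delta> :: real
  assumes "\<epsilon> > 0" and "t < 2 * \<epsilon> \<Longrightarrow> \<bar>a\<bar> \<le> \<delta> * b"
  shows "\<bar>smooth_step' (t / \<epsilon>) / \<epsilon> * a\<bar> \<le> \<delta> * (smooth_step' (t / \<epsilon>) / \<epsilon> * b)"
proof (cases "t / \<epsilon> < 2")
  case True
  then have "\<bar>a\<bar> \<le> \<delta> * b" using assms by (simp add: divide_less_eq)
  then have "smooth_step' (t / \<epsilon>) / \<epsilon> * \<bar>a\<bar> \<le> smooth_step' (t / \<epsilon>) / \<epsilon> * (\<delta> * b)"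
    by (rule mult_left_mono) (use smooth_step'_nonneg assms(1) in simp)
  then show ?thesis using smooth_step'_nonneg[of "t / \<epsilon>"] assms(1) by (simp add: abs_mult mult.left_commute)
next
  case False
  then show ?thesis by (simp add: smooth_step'_eq_0)
qed

text \<open>The flux term lives in the layer \<open>-2\<epsilon> < \<rho> < -\<epsilon>\<close>, where \<open>H \<bullet> \<nabla>\<rho>\<close> is small relative
  to \<open>|\<nabla>\<rho>|\<^sup>2\<close> by the no-flux condition; the latter has bounded integrals against the layer weight.\<close>

lemma tendsto_integral_boundary_flux:
  fixes \<rho> :: "real^'n \<Rightarrow> real" and H Hc :: "real^'n \<Rightarrow> real^'n"
  assumes \<Omega>: "\<Omega> = {x. \<rho> x < 0}" and bd: "bounded \<Omega>" and \<rho>: "C2_on UNIV \<rho>"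
    and nz: "\<And>x. \<rho> x = 0 \<Longrightarrow> grad \<rho> x \<noteq> 0"
    and Hc: "continuous_on (closure \<Omega>) Hc" and HHc: "\<And>x. x \<in> \<Omega> \<Longrightarrow> H x = Hc x"
    and no_flux: "\<And>x. x \<in> frontier \<Omega> \<Longrightarrow> Hc x \<bullet> grad \<rho> x = 0"
    and int: "\<And>k. (\<lambda>x. smooth_step' (- \<rho> x / e k) / e k * (grad \<rho> x \<bullet> H x)) integrable_on \<Omega>"
    and e: "e \<longlonglongrightarrow> 0" "\<And>k. e k > 0"
  shows "(\<lambda>k. integral \<Omega> (\<lambda>x. smooth_step' (- \<rho> x / e k) / e k * (grad \<rho> x \<bullet> H x))) \<longlonglongrightarrow> 0"
proof (rule tendstoI)
  fix r :: real assume r: "r > 0"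
  define W where "W \<epsilon> x = smooth_step' (- \<rho> x / \<epsilon>) / \<epsilon> * (grad \<rho> x \<bullet> grad \<rho> x)" for \<epsilon> x
  obtain L where W_int: "\<And>\<epsilon>. \<epsilon> > 0 \<Longrightarrow> W \<epsilon> integrable_on \<Omega>"
    and W_le: "\<And>\<epsilon>. \<epsilon> > 0 \<Longrightarrow> integral \<Omega> (W \<epsilon>) \<le> L"
    using boundary_layer_integral_bounded[OF \<Omega> bd \<rho>] unfolding W_def by blast
  define \<delta> where "\<delta> = r / (2 * (\<bar>L\<bar> + 1))"
  have \<delta>: "\<delta> > 0" using r by (simp add: \<delta>_def add_pos_nonneg)
  have "\<delta> * L \<le> \<delta> * (\<bar>L\<bar> + 1)" using \<delta> by (intro mult_left_mono) auto
  also have "\<dots> = r / 2"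
    unfolding \<delta>_def by (simp add: field_simps add_nonneg_eq_0_iff)
  finally have \<delta>L: "\<delta> * L < r" using r by simp
  obtain e1 where e1: "e1 > 0"
    and near: "\<And>x. x \<in> \<Omega> \<Longrightarrow> \<rho> x > - e1 \<Longrightarrow> \<bar>Hc x \<bullet> grad \<rho> x\<bar> \<le> \<delta> * (grad \<rho> x \<bullet> grad \<rho> x)"
    using inner_grad_small_near_frontier[OF \<Omega> bd C2_on_C1_on[OF \<rho>] nz Hc no_flux \<delta>] by blast
  have "eventually (\<lambda>k. e k < e1 / 2) sequentially"
    by (rule order_tendstoD(2)[OF e(1)]) (use e1 in simp)
  then show "eventually (\<lambda>k. dist (integral \<Omega> (\<lambda>x. smooth_step' (- \<rho> x / e k) / e k * (grad \<rho> x \<bullet> H x))) 0 < r)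
      sequentially"
  proof eventually_elim
    case (elim k)
    have pointwise: "norm (smooth_step' (- \<rho> x / e k) / e k * (grad \<rho> x \<bullet> H x)) \<le> \<delta> * W (e k) x"
      if x: "x \<in> \<Omega>" for x
      unfolding W_def real_norm_def
    proof (rule abs_layer_term_le[OF e(2)])
      assume "- \<rho> x < 2 * e k"
      then show "\<bar>grad \<rho> x \<bullet> H x\<bar> \<le> \<delta> * (grad \<rho> x \<bullet> grad \<rho> x)"
        using near[OF x] HHc[OF x] elim by (simp add: inner_commute)
    qed
    have "norm (integral \<Omega> (\<lambda>x. smooth_step' (- \<rho> x / e k) / e k * (grad \<rho> x \<bullet> H x)))
        \<le> integral \<Omega> (\<lambda>x. \<delta> * W (e k) x)"
    proof (rule integral_norm_bound_integral[OF int _ pointwise])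
      show "(\<lambda>x. \<delta> * W (e k) x) integrable_on \<Omega>"
        using integrable_on_cmult_left[OF W_int[OF e(2)], of \<delta>] by simp
    qed
    also have "\<dots> \<le> \<delta> * L" using W_le[OF e(2)] \<delta> by (simp add: mult_left_mono)
    finally show ?case using \<delta>L by simp
  qed
qed

theorem has_integral_divergence_no_flux:
  fixes \<rho> :: "real^'n \<Rightarrow> real" and H Hc :: "real^'n \<Rightarrow> real^'n"
  assumes \<Omega>: "\<Omega> = {x. \<rho> x < 0}" and bd: "bounded \<Omega>" and \<rho>: "C2_on UNIV \<rho>"
    and nz: "\<And>x. \<rho> x = 0 \<Longrightarrow> grad \<rho> x \<noteq> 0"
    and H: "\<And>i. C1_on \<Omega> (\<lambda>y. H y $ i)"
    and Hc: "continuous_on (closure \<Omega>) Hc" and HHc: "\<And>x. x \<in> \<Omega> \<Longrightarrow> H x = Hc x"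
    and no_flux: "\<And>x. x \<in> frontier \<Omega> \<Longrightarrow> Hc x \<bullet> grad \<rho> x = 0"
    and div_bound: "\<And>x. x \<in> \<Omega> \<Longrightarrow> \<bar>divergence H x\<bar> \<le> M"
  shows "(divergence H has_integral 0) \<Omega>"
proof -
  define e where "e = (\<lambda>k. inverse (real (Suc k)))"
  have e: "e \<longlonglongrightarrow> 0" "\<And>k. e k > 0"
    unfolding e_def by (rule LIMSEQ_inverse_real_of_nat) simp
  have \<rho>1: "C1_on UNIV \<rho>" using C2_on_C1_on[OF \<rho>] .
  have \<rho>c: "continuous_on \<Omega> \<rho>" using C1_on_imp_continuous_on[OF \<rho>1] continuous_on_subset by blast
  have \<Omega>m: "\<Omega> \<in> lmeasurable"
    using bd C1_on_imp_continuous_on[OF \<rho>1] by (simp add: \<Omega> lmeasurable_open open_Collect_less)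
  note div_cont = continuous_on_divergence[OF H]
  note flux = has_integral_cutoff_flux[OF \<Omega> bd \<rho>1 H e(2) div_bound]
  have "(\<lambda>k. integral \<Omega> (\<lambda>x. smooth_step (- \<rho> x / e k) * divergence H x)) \<longlonglongrightarrow> integral \<Omega> (divergence H)"
    by (rule tendsto_integral_cutoff[OF \<Omega> \<Omega>m \<rho>c div_cont div_bound e])
  moreover have "(\<lambda>k. integral \<Omega> (\<lambda>x. smooth_step (- \<rho> x / e k) * divergence H x)) \<longlonglongrightarrow> 0"
    using tendsto_integral_boundary_flux[OF \<Omega> bd \<rho> nz Hc HHc no_flux has_integral_integrable[OF flux] e]
    by (simp only: integral_unique[OF flux])
  ultimately have "integral \<Omega> (divergence H) = 0" by (rule LIMSEQ_unique)
  moreover have "divergence H integrable_on \<Omega>"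
    by (rule integrable_on_bounded_continuous[OF \<Omega>m div_cont div_bound])
  ultimately show ?thesis using integrable_integral by fastforce
qed

lemma continuous_nonneg_has_integral_0_imp_0:
  fixes f :: "'a::euclidean_space \<Rightarrow> real"
  assumes "open S" and c: "continuous_on S f" and nn: "\<And>x. x \<in> S \<Longrightarrow> f x \<ge> 0"
    and i: "(f has_integral 0) S" and x: "x \<in> S"
  shows "f x = 0"
proof -
  obtain a b where ab: "cbox a b \<subseteq> S" "x \<in> box a b" "\<forall>i\<in>Basis. a \<bullet> i < b \<bullet> i"
    using open_contains_cbox[OF \<open>open S\<close> x] by blast
  have cb: "continuous_on (cbox a b) f" using c ab(1) continuous_on_subset by blast
  have fi: "f integrable_on cbox a b" using integrable_continuous[OF cb] .
  have "integral (cbox a b) f \<le> 0"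
    using has_integral_subset_le[OF ab(1) integrable_integral[OF fi] i] nn by blast
  moreover have "integral (cbox a b) f \<ge> 0"
    by (rule integral_nonneg[OF fi]) (use nn ab(1) in auto)
  ultimately have h0: "(f has_integral 0) (cbox a b)"
    using integrable_integral[OF fi] by simp
  have "box a b \<noteq> {}" using ab(2) by blast
  moreover have "x \<in> cbox a b" using ab(2) box_subset_cbox by blast
  moreover have "\<And>y. y \<in> box a b \<Longrightarrow> 0 \<le> f y" using nn ab(1) box_subset_cbox by blast
  ultimately show ?thesis using has_integral_0_cbox_imp_0[OF cb _ h0] by blast
qed

lemma grad_zero_imp_constant:
  fixes w :: "real^'n \<Rightarrow> real"
  assumes "open S" and "connected S" and w: "C1_on S w"
    and g0: "\<And>x. x \<in> S \<Longrightarrow> grad w x = 0" and "x \<in> S" and "y \<in> S"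
  shows "w x = w y"
proof (rule has_derivative_zero_unique_connected[OF assms(1,2) _ assms(5,6)])
  fix z assume "z \<in> S"
  then show "(w has_derivative (\<lambda>h. 0)) (at z)" using C1_on_has_derivative[OF w] g0 by simp
qed

lemma has_derivative_within_eq_along_segment:
  fixes f :: "'a::real_normed_vector \<Rightarrow> real"
  assumes D: "(f has_derivative D) (at x within S)" and D': "(f has_derivative D') (at x within S)"
    and "d > 0" and seg: "\<And>t. 0 < t \<Longrightarrow> t < d \<Longrightarrow> x + t *\<^sub>R v \<in> S"
  shows "D v = D' v"
proof -
  define T where "T = {0<..<d}"
  have line: "((\<lambda>t. x + t *\<^sub>R v) has_derivative (\<lambda>h. h *\<^sub>R v)) (at 0 within T)"
    by (auto intro!: derivative_eq_intros)
  have sub: "(\<lambda>t. x + t *\<^sub>R v) ` T \<subseteq> S" using seg by (auto simp: T_def)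
  have "((\<lambda>t. f (x + t *\<^sub>R v)) has_vector_derivative E v) (at 0 within T)"
    if "(f has_derivative E) (at x within S)" for E
  proof -
    have "(f has_derivative E) (at (x + 0 *\<^sub>R v) within (\<lambda>t. x + t *\<^sub>R v) ` T)"
      using has_derivative_subset[OF that sub] by simp
    from has_derivative_in_compose[OF line this]
    have "((\<lambda>t. f (x + t *\<^sub>R v)) has_derivative (\<lambda>h. E (h *\<^sub>R v))) (at 0 within T)"
      by (simp add: o_def)
    moreover have "E (h *\<^sub>R v) = h *\<^sub>R E v" for h
      using linear_cmul[OF has_derivative_linear[OF that]] by simp
    ultimately show ?thesis by (simp add: has_vector_derivative_def)
  qed
  moreover have "at (0::real) within T \<noteq> bot"
    using trivial_limit_within islimpt_greaterThanLessThan1[OF \<open>d > 0\<close>] by (auto simp: T_def)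
  ultimately show ?thesis using vector_derivative_unique_within[of 0 T] D D' by metis
qed

lemma sublevel_contains_descent_segment:
  fixes \<rho> :: "real^'n \<Rightarrow> real"
  assumes "\<rho> differentiable (at x)" and "\<rho> x = 0" and "grad \<rho> x \<noteq> 0"
  obtains d where "d > 0" and "\<And>t. 0 < t \<Longrightarrow> t < d \<Longrightarrow> \<rho> (x - t *\<^sub>R grad \<rho> x) < 0"
proof -
  have "((\<lambda>t. x - t *\<^sub>R grad \<rho> x) has_derivative (\<lambda>h. - h *\<^sub>R grad \<rho> x)) (at 0 within {0<..})"
    by (auto intro!: derivative_eq_intros)
  moreover have "(\<rho> has_derivative (\<lambda>h. grad \<rho> x \<bullet> h)) (at (x - 0 *\<^sub>R grad \<rho> x))"
    using has_derivative_grad[OF assms(1)] by simp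
  ultimately have "((\<lambda>t. \<rho> (x - t *\<^sub>R grad \<rho> x)) has_derivative (\<lambda>h. grad \<rho> x \<bullet> (- h *\<^sub>R grad \<rho> x)))
      (at 0 within {0<..})"
    by (rule has_derivative_compose[THEN has_derivative_eq_rhs]) (simp add: o_def)
  moreover have "(\<lambda>h. grad \<rho> x \<bullet> (- h *\<^sub>R grad \<rho> x)) = (*) (- (grad \<rho> x \<bullet> grad \<rho> x))"
    by (auto simp: mult.commute)
  ultimately have der: "((\<lambda>t. \<rho> (x - t *\<^sub>R grad \<rho> x)) has_real_derivative (- (grad \<rho> x \<bullet> grad \<rho> x)))
      (at 0 within {0<..})"
    by (simp add: has_field_derivative_def)
  have neg: "- (grad \<rho> x \<bullet> grad \<rho> x) < 0" using assms(3) by simp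
  show thesis
    using has_real_derivative_neg_dec_right[OF der neg] assms(2) that by auto
qed

lemma C1_closure_imp_continuous_on:
  assumes "C1_closure S f"
  shows "continuous_on (closure S) f"
  using assms unfolding C1_closure_def continuous_on_eq_continuous_within
  by (meson has_derivative_continuous)

lemma divergence_divide_scaled_grad:
  fixes a w :: "real^'n \<Rightarrow> real"
  assumes a: "a differentiable (at x)" and w: "w differentiable (at x)"
    and g: "\<And>i. (\<lambda>y. grad w y $ i) differentiable (at x)" and wx: "w x \<noteq> 0"
  shows "divergence (\<lambda>y. (a y / w y) *\<^sub>R grad w y) x
       = divergence (\<lambda>y. a y *\<^sub>R grad w y) x / w x - a x * (grad w x \<bullet> grad w x) / (w x)\<^sup>2"
proof -
  have aw: "(\<lambda>y. a y / w y) differentiable (at x)" using a w wx by (simp add: differentiable_divide)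
  have "grad (\<lambda>y. a y / w y * grad w y $ i) x $ i
      = (a x / w x) * grad (\<lambda>y. grad w y $ i) x $ i
        + grad w x $ i * ((1 / w x ^ 2) * (w x * grad a x $ i - a x * grad w x $ i))" for i
    using grad_mult[OF aw g[of i]] grad_divide[OF a w wx] by simp
  also have "\<dots> i = (a x * grad (\<lambda>y. grad w y $ i) x $ i + grad w x $ i * grad a x $ i) / w x
        - a x * (grad w x $ i * grad w x $ i) / (w x)\<^sup>2" for i
    using wx by (simp add: field_simps power2_eq_square)
  moreover have "grad (\<lambda>y. a y * grad w y $ i) x $ i
      = a x * grad (\<lambda>y. grad w y $ i) x $ i + grad w x $ i * grad a x $ i" for i
    using grad_mult[OF a g[of i]] by simp
  ultimately show ?thesis
    by (simp add: divergence_eq_sum_grad inner_vec_def sum_subtractf sum_divide_distrib sum_distrib_left)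
qed

locale smooth_bounded_domain =
  fixes \<Omega> :: "(real^'n) set" and \<rho> :: "real^'n \<Rightarrow> real"
  assumes domain_eq: "\<Omega> = {x. \<rho> x < 0}" and bounded_domain: "bounded \<Omega>"
    and defining_C2: "C2_on UNIV \<rho>" and grad_defining_nonzero: "\<And>x. \<rho> x = 0 \<Longrightarrow> grad \<rho> x \<noteq> 0"
begin

lemma defining_C1: "C1_on UNIV \<rho>"
  using defining_C2 by (rule C2_on_C1_on)

lemma open_domain: "open \<Omega>"
  using C1_on_imp_continuous_on[OF defining_C1] by (simp add: domain_eq open_Collect_less)

lemma frontier_defining_zero: "x \<in> frontier \<Omega> \<Longrightarrow> \<rho> x = 0"
  using frontier_sublevel_subset[OF C1_on_imp_continuous_on[OF defining_C1]] by (auto simp: domain_eq)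

lemma continuous_on_closure_bounded:
  fixes f :: "real^'n \<Rightarrow> real"
  assumes "continuous_on (closure \<Omega>) f"
  obtains M where "\<And>x. x \<in> \<Omega> \<Longrightarrow> \<bar>f x\<bar> \<le> M"
  using continuous_on_compact_bound[OF compact_closure[THEN iffD2, OF bounded_domain] assms]
    closure_subset by (metis real_norm_def subsetD)

lemma no_flux_inner_grad_zero:
  assumes x: "x \<in> frontier \<Omega>"
    and G: "(w has_derivative (\<lambda>h. G \<bullet> h)) (at x within closure \<Omega>)"
    and no_flux: "\<exists>D. (w has_derivative D) (at x within closure \<Omega>) \<and> D (normal \<rho> x) = 0"
  shows "G \<bullet> grad \<rho> x = 0"
proof -
  obtain D where D: "(w has_derivative D) (at x within closure \<Omega>)" "D (normal \<rho> x) = 0"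
    using no_flux by blast
  have \<rho>x: "\<rho> x = 0" and nz: "grad \<rho> x \<noteq> 0"
    using frontier_defining_zero[OF x] grad_defining_nonzero by auto
  obtain d where "d > 0" and seg: "\<And>t. 0 < t \<Longrightarrow> t < d \<Longrightarrow> \<rho> (x - t *\<^sub>R grad \<rho> x) < 0"
    using sublevel_contains_descent_segment[OF C1_on_differentiable[OF defining_C1 UNIV_I] \<rho>x nz]
    by blast
  \<comment> \<open>the inward segment from \<open>x\<close> determines derivatives within \<open>closure \<Omega>\<close> in direction \<open>-\<nabla>\<rho> x\<close>\<close>
  have "x + t *\<^sub>R - grad \<rho> x \<in> closure \<Omega>" if "0 < t" "t < d" for t
  proof -
    have "x - t *\<^sub>R grad \<rho> x \<in> \<Omega>" using seg[OF that] by (simp add: domain_eq)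
    then show ?thesis using closure_subset by auto
  qed
  then have "D (- grad \<rho> x) = G \<bullet> - grad \<rho> x"
    by (rule has_derivative_within_eq_along_segment[OF D(1) G \<open>d > 0\<close>])
  moreover have "D (- grad \<rho> x) = - norm (grad \<rho> x) * D (normal \<rho> x)"
    using linear_cmul[OF has_derivative_linear[OF D(1)], of "- norm (grad \<rho> x)" "normal \<rho> x"] nz
    by (simp add: normal_def)
  ultimately show ?thesis using D(2) by simp
qed

end

locale no_flux_problem = smooth_bounded_domain +
  fixes w a f :: "real^'n \<Rightarrow> real"
  assumes w_C2: "C2_on \<Omega> w" and w_C1_closure: "C1_closure \<Omega> w"
    and w_pos: "\<And>x. x \<in> closure \<Omega> \<Longrightarrow> w x > 0"
    and a_C1: "C1_on \<Omega> a" and a_continuous: "continuous_on (closure \<Omega>) a"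
    and no_flux: "\<And>x. x \<in> frontier \<Omega> \<Longrightarrow>
      \<exists>D. (w has_derivative D) (at x within closure \<Omega>) \<and> D (normal \<rho> x) = 0"
    and f_continuous: "continuous_on (closure \<Omega>) f"
    and equation: "\<And>x. x \<in> \<Omega> \<Longrightarrow> divergence (\<lambda>y. a y *\<^sub>R grad w y) x = f x"
begin

lemma boundary_gradient:
  obtains G where "continuous_on (closure \<Omega>) G" and "\<And>x. x \<in> \<Omega> \<Longrightarrow> grad w x = G x"
    and "\<And>x. x \<in> frontier \<Omega> \<Longrightarrow> G x \<bullet> grad \<rho> x = 0"
proof -
  obtain G where G: "continuous_on (closure \<Omega>) G"
    and w': "\<And>x. x \<in> closure \<Omega> \<Longrightarrow> (w has_derivative (\<lambda>h. G x \<bullet> h)) (at x within closure \<Omega>)"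
    using w_C1_closure unfolding C1_closure_def by blast
  show thesis
  proof (rule that[OF G])
    fix x assume x: "x \<in> \<Omega>"
    then have "(w has_derivative (\<lambda>h. G x \<bullet> h)) (at x within \<Omega>)"
      using has_derivative_subset[OF w' closure_subset] closure_subset by blast
    then show "grad w x = G x"
      using at_within_open[OF x open_domain] by (simp add: grad_eqI)
  next
    fix x assume x: "x \<in> frontier \<Omega>"
    then have "x \<in> closure \<Omega>" by (simp add: frontier_def)
    then show "G x \<bullet> grad \<rho> x = 0" by (rule no_flux_inner_grad_zero[OF x w' no_flux[OF x]])
  qed
qed

lemma continuous_on_dissipation: "continuous_on \<Omega> (\<lambda>x. a x * (grad w x \<bullet> grad w x) / (w x)\<^sup>2)"
proof -
  have "continuous_on \<Omega> a" using continuous_on_subset[OF a_continuous closure_subset] .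
  moreover have "continuous_on \<Omega> w" "continuous_on \<Omega> (grad w)"
    using w_C2 by (simp_all add: C2_on_def C1_on_def C1_on_imp_continuous_on)
  moreover have "w x \<noteq> 0" if "x \<in> \<Omega>" for x using w_pos closure_subset that by force
  ultimately show ?thesis by (intro continuous_intros) auto
qed

lemma has_integral_source: "(f has_integral 0) \<Omega>"
proof -
  obtain G where G: "continuous_on (closure \<Omega>) G" and wG: "\<And>x. x \<in> \<Omega> \<Longrightarrow> grad w x = G x"
    and G_flux: "\<And>x. x \<in> frontier \<Omega> \<Longrightarrow> G x \<bullet> grad \<rho> x = 0"
    using boundary_gradient by blast
  obtain M where M: "\<And>x. x \<in> \<Omega> \<Longrightarrow> \<bar>f x\<bar> \<le> M"
    using continuous_on_closure_bounded[OF f_continuous] by blast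
  have "(divergence (\<lambda>y. a y *\<^sub>R grad w y) has_integral 0) \<Omega>"
  proof (rule has_integral_divergence_no_flux[OF domain_eq bounded_domain defining_C2 grad_defining_nonzero,
        where Hc = "\<lambda>y. a y *\<^sub>R G y" and M = M])
    show "C1_on \<Omega> (\<lambda>y. (a y *\<^sub>R grad w y) $ i)" for i
      using C1_on_mult[OF a_C1 C2_on_C1_on_grad[OF w_C2]] by simp
    show "continuous_on (closure \<Omega>) (\<lambda>y. a y *\<^sub>R G y)"
      by (intro continuous_intros a_continuous G)
  qed (use wG G_flux M equation in simp_all)
  then show ?thesis
    by (rule has_integral_eq[rotated]) (simp add: equation)
qed

lemma has_integral_log_source:
  "((\<lambda>x. f x / w x - a x * (grad w x \<bullet> grad w x) / (w x)\<^sup>2) has_integral 0) \<Omega>"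
proof -
  obtain G where G: "continuous_on (closure \<Omega>) G" and wG: "\<And>x. x \<in> \<Omega> \<Longrightarrow> grad w x = G x"
    and G_flux: "\<And>x. x \<in> frontier \<Omega> \<Longrightarrow> G x \<bullet> grad \<rho> x = 0"
    using boundary_gradient by blast
  have w_cont: "continuous_on (closure \<Omega>) w" by (rule C1_closure_imp_continuous_on[OF w_C1_closure])
  have w_nz: "w x \<noteq> 0" if "x \<in> \<Omega>" for x using w_pos closure_subset that by force
  have div: "divergence (\<lambda>y. (a y / w y) *\<^sub>R grad w y) x
      = f x / w x - a x * (grad w x \<bullet> grad w x) / (w x)\<^sup>2" if "x \<in> \<Omega>" for x
    using divergence_divide_scaled_grad[OF C1_on_differentiable[OF a_C1 that]
        C1_on_differentiable[OF C2_on_C1_on[OF w_C2] that]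
        C1_on_differentiable[OF C2_on_C1_on_grad[OF w_C2] that] w_nz[OF that]]
    by (simp add: equation[OF that])
  have "continuous_on (closure \<Omega>) (\<lambda>x. f x / w x - a x * (G x \<bullet> G x) / (w x)\<^sup>2)"
    by (intro continuous_intros f_continuous w_cont a_continuous G) (use w_pos in force)+
  then obtain M where M: "\<And>x. x \<in> \<Omega> \<Longrightarrow> \<bar>f x / w x - a x * (G x \<bullet> G x) / (w x)\<^sup>2\<bar> \<le> M"
    using continuous_on_closure_bounded by blast
  have "(divergence (\<lambda>y. (a y / w y) *\<^sub>R grad w y) has_integral 0) \<Omega>"
  proof (rule has_integral_divergence_no_flux[OF domain_eq bounded_domain defining_C2 grad_defining_nonzero,
        where Hc = "\<lambda>y. (a y / w y) *\<^sub>R G y" and M = M])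
    show "C1_on \<Omega> (\<lambda>y. ((a y / w y) *\<^sub>R grad w y) $ i)" for i
      using C1_on_mult[OF C1_on_divide[OF a_C1 C2_on_C1_on[OF w_C2] w_nz] C2_on_C1_on_grad[OF w_C2]]
      by simp
    show "continuous_on (closure \<Omega>) (\<lambda>y. (a y / w y) *\<^sub>R G y)"
      by (intro continuous_intros a_continuous w_cont G) (use w_pos in force)
    show "\<bar>divergence (\<lambda>y. (a y / w y) *\<^sub>R grad w y) x\<bar> \<le> M" if "x \<in> \<Omega>" for x
      using M[OF that] by (simp add: div[OF that] wG[OF that])
  qed (use wG G_flux in simp_all)
  then show ?thesis
    by (rule has_integral_eq[rotated]) (simp add: div)
qed

end

section \<open>The competition system\<close>

locale competition_equilibrium = smooth_bounded_domain +
  fixes r a1 a2 P Q K u v :: "real^'n \<Rightarrow> real"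
  assumes coefficients_continuous: "continuous_on (closure \<Omega>) r" "continuous_on (closure \<Omega>) a1"
      "continuous_on (closure \<Omega>) a2" "continuous_on (closure \<Omega>) P" "continuous_on (closure \<Omega>) Q"
      "continuous_on (closure \<Omega>) K"
    and coefficients_pos: "\<And>x. x \<in> closure \<Omega> \<Longrightarrow>
      r x > 0 \<and> a1 x > 0 \<and> a2 x > 0 \<and> P x > 0 \<and> Q x > 0 \<and> K x > 0"
    and coefficients_C2: "C2_on \<Omega> a1" "C2_on \<Omega> a2" "C2_on \<Omega> P" "C2_on \<Omega> Q"
    and equilibrium: "coexistence_equilibrium \<Omega> \<rho> r a1 a2 P Q K u v"
begin

lemma species_no_flux_problem:
  assumes s: "C2_on \<Omega> s" "continuous_on (closure \<Omega>) s" "\<And>x. x \<in> closure \<Omega> \<Longrightarrow> s x > 0"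
    and p: "C2_on \<Omega> p" "continuous_on (closure \<Omega>) p" "\<And>x. x \<in> closure \<Omega> \<Longrightarrow> p x > 0"
    and b: "C1_on \<Omega> b" "continuous_on (closure \<Omega>) b"
    and sp: "C1_closure \<Omega> (\<lambda>x. s x / p x)"
    and flux: "\<And>x. x \<in> frontier \<Omega> \<Longrightarrow>
      \<exists>D. ((\<lambda>z. s z / p z) has_derivative D) (at x within closure \<Omega>) \<and> D (normal \<rho> x) = 0"
    and eq: "\<And>x. x \<in> \<Omega> \<Longrightarrow> divergence (\<lambda>y. b y *\<^sub>R grad (\<lambda>z. s z / p z) y) x
      + r x * s x * (1 - (u x + v x) / K x) = 0"
  shows "no_flux_problem \<Omega> \<rho> (\<lambda>x. s x / p x) b (\<lambda>x. - (r x * s x * (1 - (u x + v x) / K x)))"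
proof (intro no_flux_problem.intro no_flux_problem_axioms.intro smooth_bounded_domain_axioms)
  show "C2_on \<Omega> (\<lambda>x. s x / p x)"
    using C2_on_divide[OF open_domain s(1) p(1)] p(3) closure_subset by force
  show "continuous_on (closure \<Omega>) (\<lambda>x. - (r x * s x * (1 - (u x + v x) / K x)))"
    using equilibrium coefficients_pos unfolding coexistence_equilibrium_def
    by (intro continuous_intros coefficients_continuous s(2)) force+
qed (use s p b sp flux eq coefficients_pos in \<open>auto simp: C2_on_C1_on add_eq_0_iff\<close>)

lemma equilibrium_positive: "x \<in> closure \<Omega> \<Longrightarrow> u x > 0" "x \<in> closure \<Omega> \<Longrightarrow> v x > 0"
  using equilibrium by (auto simp: coexistence_equilibrium_def)

lemma first_species:
  "no_flux_problem \<Omega> \<rho> (\<lambda>x. u x / P x) a1 (\<lambda>x. - (r x * u x * (1 - (u x + v x) / K x)))"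
  using equilibrium coefficients_pos coefficients_C2 coefficients_continuous
  by (intro species_no_flux_problem) (auto simp: coexistence_equilibrium_def C2_on_C1_on)

lemma second_species:
  "no_flux_problem \<Omega> \<rho> (\<lambda>x. v x / Q x) a2 (\<lambda>x. - (r x * v x * (1 - (u x + v x) / K x)))"
  using equilibrium coefficients_pos coefficients_C2 coefficients_continuous
  by (intro species_no_flux_problem) (auto simp: coexistence_equilibrium_def C2_on_C1_on)

lemma saturated_and_first_species_flat:
  assumes P_eq: "\<And>x. x \<in> \<Omega> \<Longrightarrow> P x = c * K x" and "c > 0" and x: "x \<in> \<Omega>"
  shows "u x + v x = K x" and "grad (\<lambda>x. u x / P x) x = 0"
proof -
  interpret S1: no_flux_problem \<Omega> \<rho> "\<lambda>x. u x / P x" a1 "\<lambda>x. - (r x * u x * (1 - (u x + v x) / K x))"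
    by (rule first_species)
  interpret S2: no_flux_problem \<Omega> \<rho> "\<lambda>x. v x / Q x" a2 "\<lambda>x. - (r x * v x * (1 - (u x + v x) / K x))"
    by (rule second_species)
  define z where "z x = (u x + v x) / K x" for x
  define q where "q x = a1 x * (grad (\<lambda>x. u x / P x) x \<bullet> grad (\<lambda>x. u x / P x) x) / (u x / P x)\<^sup>2" for x
  define F where "F x = r x * K x * (1 - z x)\<^sup>2 + q x / c" for x
  have pos: "r y > 0" "a1 y > 0" "K y > 0" "P y > 0" "u y > 0" "v y > 0" if "y \<in> \<Omega>" for y
    using coefficients_pos equilibrium_positive closure_subset that by (force+)
  have "((\<lambda>x. - (1 / c) * (- (r x * u x * (1 - z x)) / (u x / P x) - q x)
      + - (r x * u x * (1 - z x)) + - (r x * v x * (1 - z x))) has_integral (- (1 / c) * 0 + 0 + 0)) \<Omega>"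
    unfolding z_def q_def
    by (intro has_integral_add has_integral_mult_right S1.has_integral_log_source
        S1.has_integral_source S2.has_integral_source)
  then have "(F has_integral (- (1 / c) * 0 + 0 + 0)) \<Omega>"
  proof (rule has_integral_eq[rotated])
    fix y assume y: "y \<in> \<Omega>"
    have v_eq: "v y = z y * K y - u y" using pos(3)[OF y] by (simp add: z_def)
    show "- (1 / c) * (- (r y * u y * (1 - z y)) / (u y / P y) - q y)
        + - (r y * u y * (1 - z y)) + - (r y * v y * (1 - z y)) = F y"
      using pos[OF y] P_eq[OF y] \<open>c > 0\<close> unfolding F_def
      by (simp add: field_simps power2_eq_square) (simp add: algebra_simps v_eq)
  qed
  then have "(F has_integral 0) \<Omega>" by simp
  moreover have "continuous_on \<Omega> F"
  proof -
    have "continuous_on \<Omega> f" if "continuous_on (closure \<Omega>) f" for f :: "real^'n \<Rightarrow> real"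
      using continuous_on_subset[OF that closure_subset] .
    then have r: "continuous_on \<Omega> r" and K: "continuous_on \<Omega> K"
      and uv: "continuous_on \<Omega> (\<lambda>x. u x + v x)"
      using coefficients_continuous equilibrium
      by (auto simp: coexistence_equilibrium_def intro!: continuous_intros)
    have "continuous_on \<Omega> z"
      unfolding z_def by (rule continuous_on_divide[OF uv K]) (use pos(3) in force)
    moreover have "continuous_on \<Omega> q" unfolding q_def by (rule S1.continuous_on_dissipation)
    ultimately show ?thesis
      unfolding F_def using \<open>c > 0\<close>
      by (intro continuous_on_add continuous_on_mult continuous_on_power continuous_on_diff
          continuous_on_divide continuous_on_const r K) auto
  qed
  moreover have q_nonneg: "q y \<ge> 0" if "y \<in> \<Omega>" for y using pos[OF that] by (simp add: q_def)
  moreover have T_nonneg: "r y * K y * (1 - z y)\<^sup>2 \<ge> 0" if "y \<in> \<Omega>" for y using pos[OF that] by simp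
  moreover have "F y \<ge> 0" if "y \<in> \<Omega>" for y
    using q_nonneg[OF that] T_nonneg[OF that] \<open>c > 0\<close> by (simp add: F_def)
  ultimately have "F x = 0"
    by (intro continuous_nonneg_has_integral_0_imp_0[OF open_domain _ _ _ x])
  moreover have "q x / c \<ge> 0" using q_nonneg[OF x] \<open>c > 0\<close> by simp
  ultimately have "r x * K x * (1 - z x)\<^sup>2 = 0" and "q x / c = 0"
    using T_nonneg[OF x] unfolding F_def by linarith+
  then have "(1 - z x)\<^sup>2 = 0" and "q x = 0" using pos[OF x] \<open>c > 0\<close> by simp_all
  then show "u x + v x = K x" and "grad (\<lambda>x. u x / P x) x = 0"
    using pos[OF x] by (auto simp: z_def q_def)
qed

lemma second_species_flat:
  assumes saturated: "\<And>x. x \<in> \<Omega> \<Longrightarrow> u x + v x = K x" and x: "x \<in> \<Omega>"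
  shows "grad (\<lambda>x. v x / Q x) x = 0"
proof -
  interpret S2: no_flux_problem \<Omega> \<rho> "\<lambda>x. v x / Q x" a2 "\<lambda>x. - (r x * v x * (1 - (u x + v x) / K x))"
    by (rule second_species)
  define q where "q x = a2 x * (grad (\<lambda>x. v x / Q x) x \<bullet> grad (\<lambda>x. v x / Q x) x) / (v x / Q x)\<^sup>2" for x
  have pos: "a2 y > 0" "K y \<noteq> 0" "Q y > 0" "v y > 0" if "y \<in> \<Omega>" for y
    using coefficients_pos equilibrium_positive closure_subset that by (force+)
  have "((\<lambda>x. - q x) has_integral 0) \<Omega>"
    using S2.has_integral_log_source unfolding q_def
    by (rule has_integral_eq[rotated]) (simp add: saturated pos)
  from has_integral_neg[OF this] have "(q has_integral 0) \<Omega>" by simp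
  moreover have "continuous_on \<Omega> q" unfolding q_def by (rule S2.continuous_on_dissipation)
  moreover have "q y \<ge> 0" if "y \<in> \<Omega>" for y using pos[OF that] by (simp add: q_def)
  ultimately have "q x = 0" by (intro continuous_nonneg_has_integral_0_imp_0[OF open_domain _ _ _ x])
  then show ?thesis using pos[OF x] by (simp add: q_def)
qed

lemma capacities_linearly_dependent:
  assumes "connected \<Omega>" and "\<Omega> \<noteq> {}" and P_eq: "\<And>x. x \<in> \<Omega> \<Longrightarrow> P x = c * K x" and "c > 0"
  shows "\<exists>c1 c2. (c1 \<noteq> 0 \<or> c2 \<noteq> 0) \<and> (\<forall>x\<in>\<Omega>. c1 * Q x + c2 * K x = 0)"
proof -
  interpret S1: no_flux_problem \<Omega> \<rho> "\<lambda>x. u x / P x" a1 "\<lambda>x. - (r x * u x * (1 - (u x + v x) / K x))"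
    by (rule first_species)
  interpret S2: no_flux_problem \<Omega> \<rho> "\<lambda>x. v x / Q x" a2 "\<lambda>x. - (r x * v x * (1 - (u x + v x) / K x))"
    by (rule second_species)
  obtain x0 where x0: "x0 \<in> \<Omega>" using \<open>\<Omega> \<noteq> {}\<close> by blast
  have saturated: "u y + v y = K y" if "y \<in> \<Omega>" for y
    by (rule saturated_and_first_species_flat(1)[OF P_eq \<open>c > 0\<close> that])
  have pos: "P y > 0" "Q y > 0" "v y > 0" if "y \<in> \<Omega>" for y
    using coefficients_pos equilibrium_positive closure_subset that by (force+)
  have "(v x0 / Q x0) * Q x + (u x0 / P x0 * c - 1) * K x = 0" if x: "x \<in> \<Omega>" for x
  proof -
    have k1: "u x / P x = u x0 / P x0"
      using grad_zero_imp_constant[OF open_domain \<open>connected \<Omega>\<close> C2_on_C1_on[OF S1.w_C2]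
          saturated_and_first_species_flat(2)[OF P_eq \<open>c > 0\<close>] x x0] .
    have k2: "v x / Q x = v x0 / Q x0"
      using grad_zero_imp_constant[OF open_domain \<open>connected \<Omega>\<close> C2_on_C1_on[OF S2.w_C2]
          second_species_flat[OF saturated] x x0] .
    have "u x = u x / P x * P x" using pos[OF x] by simp
    also have "\<dots> = u x0 / P x0 * (c * K x)" unfolding k1 by (simp add: P_eq[OF x])
    finally have "u x = u x0 / P x0 * (c * K x)" .
    moreover have "v x = v x / Q x * Q x" using pos[OF x] by simp
    then have "v x = v x0 / Q x0 * Q x" by (simp only: k2)
    ultimately show ?thesis using saturated[OF x] by (simp add: algebra_simps)
  qed
  moreover have "v x0 / Q x0 \<noteq> 0" using pos[OF x0] by simp
  ultimately show ?thesis by blast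
qed

end

theorem lemma8:
  fixes \<Omega> :: "(real^'n) set" and \<beta> :: real and \<rho> :: "real^'n \<Rightarrow> real"
    and r a1 a2 P Q K :: "real^'n \<Rightarrow> real"
  assumes "open \<Omega>" and "bounded \<Omega>" and "connected \<Omega>" and "\<Omega> \<noteq> {}"
    and "\<beta> > 0" and "C2beta_defining_fun \<beta> \<Omega> \<rho>"
    and "continuous_on (closure \<Omega>) r" and "continuous_on (closure \<Omega>) a1"
    and "continuous_on (closure \<Omega>) a2" and "continuous_on (closure \<Omega>) P"
    and "continuous_on (closure \<Omega>) Q" and "continuous_on (closure \<Omega>) K"
    and "\<forall>x\<in>closure \<Omega>. r x > 0 \<and> a1 x > 0 \<and> a2 x > 0 \<and> P x > 0 \<and> Q x > 0 \<and> K x > 0"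
    and "C2_on \<Omega> a1" and "C2_on \<Omega> a2" and "C2_on \<Omega> P" and "C2_on \<Omega> Q"
    and "\<exists>c. \<forall>x\<in>\<Omega>. P x / K x = c"
    and "\<not> (\<exists>c1 c2. (c1 \<noteq> 0 \<or> c2 \<noteq> 0) \<and> (\<forall>x\<in>\<Omega>. c1 * Q x + c2 * K x = 0))"
  shows "\<not> (\<exists>u v. coexistence_equilibrium \<Omega> \<rho> r a1 a2 P Q K u v)"
proof
  assume "\<exists>u v. coexistence_equilibrium \<Omega> \<rho> r a1 a2 P Q K u v"
  then obtain u v where "coexistence_equilibrium \<Omega> \<rho> r a1 a2 P Q K u v" by blast
  then interpret competition_equilibrium \<Omega> \<rho> r a1 a2 P Q K u v
    using assms(2,6-17) by unfold_locales (auto simp: C2beta_defining_fun_def)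
  obtain c where c: "\<And>x. x \<in> \<Omega> \<Longrightarrow> P x / K x = c" using assms(18) by blast
  obtain x0 where "x0 \<in> \<Omega>" using assms(4) by blast
  then have "c > 0" using c[of x0] coefficients_pos[of x0] closure_subset by force
  moreover have "P x = c * K x" if "x \<in> \<Omega>" for x
    using c[OF that] coefficients_pos[of x] closure_subset that by (force simp: field_simps)
  ultimately show False
    using capacities_linearly_dependent[OF assms(3,4)] assms(19) by blast
qed

end
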